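(* Let $\mathfrak M$ be a weight matrix such that $m_k^{1/k}\to\infty$ for all $\mathbf M\in\mathfrak M$. If $F:\Omega_1\to\Omega_2$ is a real analytic mapping between open sets $\Omega_j\subseteq\mathbb{R}^{n_j}$, $j=1,2$, then $u\circ F\in\mathcal{E}^{[\mathfrak M]}(\Omega_1)$ for every $u\in\mathcal{E}^{[\mathfrak M]}(\Omega_2)$, i.e. the pullback $F^*:\mathcal{E}^{[\mathfrak M]}(\Omega_2)\to\mathcal{E}^{[\mathfrak M]}(\Omega_1)$ is well defined (both in the Roumieu case $[\mathfrak M]=\{\mathfrak M\}$ and in the Beurling case $[\mathfrak M]=(\mathfrak M)$).
   Context: A weight sequence is a sequence $\mathbf M=(M_k)_{k\in\mathbb N}$ with $M_0=1$, such that $\mu_k:=M_k/M_{k-1}$ satisfies $1\le\mu_1\le\mu_2\le\cdots$, and $M_k^{1/k}\to\infty$; write $m_k=M_k/k!$. A weight matrix is a family of weight sequences totally ordered by the pointwise order. For open $\Omega\subseteq\mathbb R^n$, $\mathcal E^{\{\mathfrak M\}}(\Omega)$ is the set of $f\in C^\infty(\Omega)$ such that for every relatively compact open $V\subseteq\Omega$ there exist $\mathbf M\in\mathfrak M$ and $\rho>0$ with $\sup_{x\in V,\alpha\in\mathbb N^n}|\partial^\alpha f(x)|/(\rho^{|\alpha|}M_{|\alpha|})<\infty$; $\mathcal E^{(\mathfrak M)}(\Omega)$ is the set of $f\in C^\infty(\Omega)$ such that this supremum is finite for every relatively compact open $V\subseteq\Omega$, every $\mathbf M\in\mathfrak M$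 and every $\rho>0$. *)

theory Defs
  imports "HOL-Analysis.Analysis"
begin

definition quot_seq :: "(nat \<Rightarrow> real) \<Rightarrow> nat \<Rightarrow> real" where
  "quot_seq M k = M k / M (k - 1)"

definition weight_sequence :: "(nat \<Rightarrow> real) \<Rightarrow> bool" where
  "weight_sequence M \<longleftrightarrow>
     M 0 = 1 \<and> 1 \<le> quot_seq M 1 \<and> (\<forall>k\<ge>1. quot_seq M k \<le> quot_seq M (Suc k)) \<and>
     filterlim (\<lambda>k. M k powr (1 / real k)) at_top sequentially"

definition weight_matrix :: "(nat \<Rightarrow> real) set \<Rightarrow> bool" where
  "weight_matrix \<MM> \<longleftrightarrow> (\<forall>M\<in>\<MM>. weight_sequence M) \<and>
     (\<forall>M\<in>\<MM>. \<forall>N\<in>\<MM>. (\<forall>k. M k \<le> N k) \<or> (\<forall>k. N k \<le> M k))"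

definition pd :: "'n::finite \<Rightarrow> (real^'n \<Rightarrow> real) \<Rightarrow> real^'n \<Rightarrow> real" where
  "pd i g x = deriv (\<lambda>t::real. g (x + t *\<^sub>R axis i 1)) 0"

primrec dlist :: "'n::finite list \<Rightarrow> (real^'n \<Rightarrow> real) \<Rightarrow> real^'n \<Rightarrow> real" where
  "dlist [] f = f"
| "dlist (i # is) f = pd i (dlist is f)"

text \<open>Partial derivative for multi-index alpha: differentiate alpha i times in direction i
 (in some fixed order; for smooth functions the order is irrelevant).\<close>
definition pmulti :: "('n::finite \<Rightarrow> nat) \<Rightarrow> (real^'n \<Rightarrow> real) \<Rightarrow> real^'n \<Rightarrow> real" where
  "pmulti \<alpha> f = dlist (SOME xs. \<forall>i. count_list xs i = \<alpha> i) f"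

definition mlen :: "('n::finite \<Rightarrow> nat) \<Rightarrow> nat" where
  "mlen \<alpha> = (\<Sum>i\<in>UNIV. \<alpha> i)"

definition smooth_on :: "(real^'n::finite) set \<Rightarrow> (real^'n \<Rightarrow> real) \<Rightarrow> bool" where
  "smooth_on \<Omega> f \<longleftrightarrow> (\<forall>ds. continuous_on \<Omega> (dlist ds f) \<and>
      (\<forall>i. \<forall>x\<in>\<Omega>. (\<lambda>t::real. dlist ds f (x + t *\<^sub>R axis i 1)) differentiable (at 0)))"

definition rel_compact_open :: "(real^'n::finite) set \<Rightarrow> (real^'n) set \<Rightarrow> bool" where
  "rel_compact_open V \<Omega> \<longleftrightarrow> open V \<and> compact (closure V) \<and> closure V \<subseteq> \<Omega>"

definition roumieu :: "(nat \<Rightarrow> real) set \<Rightarrow> (real^'n::finite) set \<Rightarrow> (real^'n \<Rightarrow> real) set" where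
  "roumieu \<MM> \<Omega> = {f. smooth_on \<Omega> f \<and>
     (\<forall>V. rel_compact_open V \<Omega> \<longrightarrow>
        (\<exists>M\<in>\<MM>. \<exists>\<rho>>0. \<exists>C. \<forall>x\<in>V. \<forall>\<alpha>.
            \<bar>pmulti \<alpha> f x\<bar> \<le> C * (\<rho> ^ mlen \<alpha> * M (mlen \<alpha>))))}"

definition beurling :: "(nat \<Rightarrow> real) set \<Rightarrow> (real^'n::finite) set \<Rightarrow> (real^'n \<Rightarrow> real) set" where
  "beurling \<MM> \<Omega> = {f. smooth_on \<Omega> f \<and>
     (\<forall>V. rel_compact_open V \<Omega> \<longrightarrow>
        (\<forall>M\<in>\<MM>. \<forall>\<rho>>0. \<exists>C. \<forall>x\<in>V. \<forall>\<alpha>.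
            \<bar>pmulti \<alpha> f x\<bar> \<le> C * (\<rho> ^ mlen \<alpha> * M (mlen \<alpha>))))}"

text \<open>g is real analytic on Omega: near every point it is the sum of an (unconditionally,
 i.e. absolutely) convergent power series.\<close>
definition real_analytic_on :: "(real^'n::finite) set \<Rightarrow> (real^'n \<Rightarrow> real) \<Rightarrow> bool" where
  "real_analytic_on \<Omega> g \<longleftrightarrow> (\<forall>x0\<in>\<Omega>. \<exists>r>0. \<exists>c :: ('n \<Rightarrow> nat) \<Rightarrow> real.
      \<forall>x\<in>ball x0 r. ((\<lambda>\<alpha>. c \<alpha> * (\<Prod>i\<in>UNIV. (x$i - x0$i) ^ \<alpha> i)) has_sum g x) UNIV)"

definition real_analytic_map :: "(real^'n::finite) set \<Rightarrow> (real^'n \<Rightarrow> real^'m::finite) \<Rightarrow> bool" where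
  "real_analytic_map \<Omega> F \<longleftrightarrow> (\<forall>j. real_analytic_on \<Omega> (\<lambda>x. F x $ j))"

end

theory Submission
  imports Defs
begin

text \<open>Write \<open>\<partial>\<^bsup>ds\<^esup>\<close> for the iterated partial derivative along a list \<open>ds\<close> of coordinate directions.
  Repeated use of the chain and product rules writes \<open>\<partial>\<^bsup>ds\<^esup>(u \<circ> F)(x)\<close>, with \<open>k = |ds|\<close>, as a sum of
  terms \<open>\<partial>\<^bsup>es\<^esup>u(F x) \<cdot> \<Prod> \<partial>\<^bsup>fs\<^esup>F\<^sub>j(x)\<close> with nonempty \<open>fs\<close> and as many factors as \<open>|es|\<close>.
  On a compact set real analyticity gives Cauchy estimates \<open>|\<partial>\<^bsup>fs\<^esup>F\<^sub>j| \<le> C R\<^bsup>l\<^esup> l!\<close> (\<open>l = |fs|\<close>), and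
  the estimates of all terms with \<open>|es| = j\<close> add up to \<open>(n C)\<^sup>j R\<^sup>k L(k, j)\<close>, where the Lah numbers
  satisfy \<open>L(k, j) j! \<le> 3\<^sup>k k!\<close>. A bound \<open>c \<rho>\<^sup>j M\<^sub>j\<close> for the derivatives of \<open>u\<close> thus gives
  \<open>\<Sum>\<^sub>j c (\<rho> n C)\<^sup>j R\<^sup>k L(k, j) M\<^sub>j\<close> for those of \<open>u \<circ> F\<close>. Log-convexity \<open>M\<^sub>j M\<^bsub>k-j\<^esub> \<le> M\<^sub>k\<close> together
  with \<open>(k-j)! \<le> D \<sigma>\<^bsup>k-j\<^esup> M\<^bsub>k-j\<^esub>\<close>, valid for every \<open>\<sigma> > 0\<close> because \<open>m\<^sub>k\<^bsup>1/k\<^esup> \<rightarrow> \<infinity>\<close>, bounds this by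
  \<open>c D (12 R \<sigma>)\<^sup>k M\<^sub>k\<close> whenever \<open>\<sigma> \<ge> \<rho> n C\<close>. So the constant \<open>\<rho>\<close> is only multiplied by \<open>12 R n C\<close>,
  which is harmless in the Roumieu case and can be compensated by choosing \<open>\<rho>\<close> small in the
  Beurling case. Since partial derivatives of smooth functions commute, bounds on the iterated
  derivatives \<open>\<partial>\<^bsup>ds\<^esup>\<close> and on the \<open>\<partial>\<^sup>\<alpha>\<close> of the definitions are equivalent.\<close>

lemma pd_eqI:
  assumes "((\<lambda>t. g (x + t *\<^sub>R axis i 1)) has_real_derivative D) (at 0)"
  shows "pd i g x = D"
  using assms unfolding pd_def by (rule DERIV_imp_deriv)

lemma eventually_line_in_open:
  fixes x :: "'a::real_normed_vector"
  assumes "open S" "x \<in> S"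
  shows "\<forall>\<^sub>F t in nhds (0::real). x + t *\<^sub>R v \<in> S"
proof -
  have "((\<lambda>t::real. x + t *\<^sub>R v) \<longlongrightarrow> x + 0 *\<^sub>R v) (nhds 0)"
    by (intro tendsto_add tendsto_const tendsto_scaleR filterlim_ident)
  then show ?thesis using assms topological_tendstoD by fastforce
qed

lemma pd_cong_open:
  assumes "open S" "x \<in> S" "\<And>y. y \<in> S \<Longrightarrow> g y = h y"
  shows "pd i g x = pd i h x"
proof -
  have "\<forall>\<^sub>F t in nhds 0. g (x + t *\<^sub>R axis i 1) = h (x + t *\<^sub>R axis i 1)"
    using eventually_line_in_open[OF assms(1,2)] by eventually_elim (use assms(3) in auto)
  then have "DERIV (\<lambda>t. g (x + t *\<^sub>R axis i 1)) 0 :> D \<longleftrightarrow> DERIV (\<lambda>t. h (x + t *\<^sub>R axis i 1)) 0 :> D"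
    for D by (rule DERIV_cong_ev[OF refl _ refl])
  then show ?thesis unfolding pd_def deriv_def by simp
qed

lemma DERIV_line_cong_open:
  fixes x :: "'a::real_normed_vector"
  assumes "open S" "x \<in> S" "\<And>y. y \<in> S \<Longrightarrow> g y = h y"
    and "((\<lambda>t. h (x + t *\<^sub>R v)) has_real_derivative D) (at 0)"
  shows "((\<lambda>t. g (x + t *\<^sub>R v)) has_real_derivative D) (at 0)"
proof -
  have "\<forall>\<^sub>F t in nhds 0. g (x + t *\<^sub>R v) = h (x + t *\<^sub>R v)"
    using eventually_line_in_open[OF assms(1,2)] by eventually_elim (use assms(3) in auto)
  from DERIV_cong_ev[OF refl this refl] show ?thesis using assms(4) by blast
qed

lemma dlist_append: "dlist ds (dlist es f) = dlist (ds @ es) f"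
  by (induction ds) auto

lemma smooth_on_dlist: "smooth_on S f \<Longrightarrow> smooth_on S (dlist es f)"
  unfolding smooth_on_def by (simp add: dlist_append)

lemma smooth_on_continuous_dlist: "smooth_on S f \<Longrightarrow> continuous_on S (dlist ds f)"
  unfolding smooth_on_def by blast

lemma smooth_on_DERIV_line:
  assumes "smooth_on S f" "x \<in> S"
  shows "((\<lambda>t. dlist ds f (x + t *\<^sub>R axis i 1)) has_real_derivative dlist (i # ds) f x) (at 0)"
proof -
  have "(\<lambda>t::real. dlist ds f (x + t *\<^sub>R axis i 1)) differentiable (at 0)"
    using assms unfolding smooth_on_def by blast
  then show ?thesis
    by (simp add: pd_def DERIV_deriv_iff_real_differentiable)
qed

lemma DERIV_line_shift:
  fixes v :: "'a::real_vector"
  assumes "((\<lambda>t. g (z + t0 *\<^sub>R v + t *\<^sub>R v)) has_real_derivative D) (at 0)"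
  shows "((\<lambda>t. g (z + t *\<^sub>R v)) has_real_derivative D) (at t0)"
proof -
  have "((\<lambda>t. g (z + t0 *\<^sub>R v + (t - t0) *\<^sub>R v)) has_real_derivative D) (at t0)"
    using DERIV_shift[of "\<lambda>t. g (z + t0 *\<^sub>R v + t *\<^sub>R v)" D t0 "-t0"] assms by simp
  moreover have "z + t0 *\<^sub>R v + (t - t0) *\<^sub>R v = z + t *\<^sub>R v" for t
    by (simp add: algebra_simps)
  ultimately show ?thesis by simp
qed

lemma smooth_on_DERIV_line_at:
  assumes "smooth_on S f" "z + t0 *\<^sub>R axis i 1 \<in> S"
  shows "((\<lambda>t. dlist ds f (z + t *\<^sub>R axis i 1)) has_real_derivative
           dlist (i # ds) f (z + t0 *\<^sub>R axis i 1)) (at t0)"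
  by (rule DERIV_line_shift[OF smooth_on_DERIV_line[OF assms]])

subsection \<open>Symmetry of second partial derivatives\<close>

lemma dist_add_two_axis_le:
  fixes y :: "real^'n::finite"
  shows "dist (y + s *\<^sub>R axis a 1 + t *\<^sub>R axis b 1) y \<le> \<bar>s\<bar> + \<bar>t\<bar>"
proof -
  have "norm (s *\<^sub>R axis a 1 + t *\<^sub>R axis b 1 :: real^'n)
      \<le> norm (s *\<^sub>R axis a 1 :: real^'n) + norm (t *\<^sub>R axis b 1 :: real^'n)"
    by (rule norm_triangle_ineq)
  then show ?thesis by (simp add: dist_norm)
qed

lemma second_difference_mvt:
  fixes y :: "real^'n::finite"
  assumes sm: "smooth_on S g" and sub: "ball y r \<subseteq> S" and h: "0 < h" "2 * h < r"
  obtains w where "dist w y < 2 * h"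
    "g (y + h *\<^sub>R axis a 1 + h *\<^sub>R axis b 1) - g (y + h *\<^sub>R axis a 1) - g (y + h *\<^sub>R axis b 1) + g y
      = h * h * pd b (pd a g) w"
proof -
  note near = dist_add_two_axis_le[of y]
  have inS: "y + s *\<^sub>R axis a 1 + t *\<^sub>R axis b 1 \<in> S" if "\<bar>s\<bar> \<le> h" "\<bar>t\<bar> \<le> h" for s t a b
    using near[of s a t b] that h sub by (auto simp: dist_commute)
  define \<psi> where "\<psi> s = g (y + h *\<^sub>R axis b 1 + s *\<^sub>R axis a 1) - g (y + s *\<^sub>R axis a 1)" for s
  define \<psi>' where "\<psi>' s = pd a g (y + h *\<^sub>R axis b 1 + s *\<^sub>R axis a 1) - pd a g (y + s *\<^sub>R axis a 1)"
    for s
  have "DERIV \<psi> s :> \<psi>' s" if "0 \<le> s" "s \<le> h" for s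
  proof -
    have "y + h *\<^sub>R axis b 1 + s *\<^sub>R axis a 1 \<in> S" "y + 0 *\<^sub>R axis a 1 + s *\<^sub>R axis a 1 \<in> S"
      using inS[of h s b a] inS[of 0 s a a] that h by auto
    from this[THEN smooth_on_DERIV_line_at[OF sm, of _ _ _ "[]"]] show ?thesis
      unfolding \<psi>_def \<psi>'_def by (auto intro: DERIV_diff)
  qed
  then obtain \<sigma> where \<sigma>: "0 < \<sigma>" "\<sigma> < h" "\<psi> h - \<psi> 0 = h * \<psi>' \<sigma>"
    using MVT2[of 0 h \<psi> \<psi>'] h by auto
  define \<phi> where "\<phi> t = pd a g (y + \<sigma> *\<^sub>R axis a 1 + t *\<^sub>R axis b 1)" for t
  have "DERIV \<phi> t :> pd b (pd a g) (y + \<sigma> *\<^sub>R axis a 1 + t *\<^sub>R axis b 1)" if "0 \<le> t" "t \<le> h" for t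
    unfolding \<phi>_def
    using smooth_on_DERIV_line_at[OF sm inS[of \<sigma> t], of "[a]"] that \<sigma> by simp
  then obtain \<tau> where \<tau>: "0 < \<tau>" "\<tau> < h"
     "\<phi> h - \<phi> 0 = h * pd b (pd a g) (y + \<sigma> *\<^sub>R axis a 1 + \<tau> *\<^sub>R axis b 1)"
    using MVT2[of 0 h \<phi> "\<lambda>t. pd b (pd a g) (y + \<sigma> *\<^sub>R axis a 1 + t *\<^sub>R axis b 1)"] h by auto
  have "\<psi>' \<sigma> = \<phi> h - \<phi> 0" "\<psi> h - \<psi> 0 =
      g (y + h *\<^sub>R axis a 1 + h *\<^sub>R axis b 1) - g (y + h *\<^sub>R axis a 1) - g (y + h *\<^sub>R axis b 1) + g y"
    unfolding \<psi>_def \<psi>'_def \<phi>_def by (simp_all add: algebra_simps)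
  moreover have "dist (y + \<sigma> *\<^sub>R axis a 1 + \<tau> *\<^sub>R axis b 1) y < 2 * h"
    using near[of \<sigma> a \<tau> b] \<sigma> \<tau> by simp
  ultimately show ?thesis using that \<sigma>(3) \<tau>(3) by auto
qed

lemma pd_commute_approx:
  fixes y :: "real^'n::finite"
  assumes sm: "smooth_on S g" and S: "open S" "y \<in> S" and e: "e > 0"
  shows "\<bar>pd a (pd b g) y - pd b (pd a g) y\<bar> \<le> 2 * e"
proof -
  obtain r where r: "r > 0" "ball y r \<subseteq> S" using S open_contains_ball by blast
  have cont: "continuous_on S (pd a (pd b g))" "continuous_on S (pd b (pd a g))"
    using smooth_on_continuous_dlist[OF sm, of "[a, b]"] smooth_on_continuous_dlist[OF sm, of "[b, a]"]
    by auto
  obtain d1 where d1: "d1 > 0"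
    "\<And>x. x \<in> S \<Longrightarrow> dist x y < d1 \<Longrightarrow> dist (pd a (pd b g) x) (pd a (pd b g) y) < e"
    using cont(1) S(2) e unfolding continuous_on_iff by blast
  obtain d2 where d2: "d2 > 0"
    "\<And>x. x \<in> S \<Longrightarrow> dist x y < d2 \<Longrightarrow> dist (pd b (pd a g) x) (pd b (pd a g) y) < e"
    using cont(2) S(2) e unfolding continuous_on_iff by blast
  define h where "h = min r (min d1 d2) / 3"
  have h: "h > 0" "2 * h < r" "2 * h \<le> d1" "2 * h \<le> d2" using r d1 d2 by (auto simp: h_def)
  obtain w where w: "dist w y < 2 * h"
    "g (y + h *\<^sub>R axis a 1 + h *\<^sub>R axis b 1) - g (y + h *\<^sub>R axis a 1) - g (y + h *\<^sub>R axis b 1) + g y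
    = h * h * pd b (pd a g) w"
    using second_difference_mvt[OF sm r(2) h(1,2)] .
  obtain w' where w': "dist w' y < 2 * h"
    "g (y + h *\<^sub>R axis b 1 + h *\<^sub>R axis a 1) - g (y + h *\<^sub>R axis b 1) - g (y + h *\<^sub>R axis a 1) + g y
    = h * h * pd a (pd b g) w'"
    using second_difference_mvt[OF sm r(2) h(1,2)] .
  have "h * h * pd b (pd a g) w = h * h * pd a (pd b g) w'"
    using w(2) w'(2) by (simp add: algebra_simps)
  then have eq: "pd b (pd a g) w = pd a (pd b g) w'" using h by simp
  have "w \<in> S" "w' \<in> S" using w(1) w'(1) h r(2) by (auto simp: dist_commute)
  then have "dist (pd b (pd a g) w) (pd b (pd a g) y) < e" "dist (pd a (pd b g) w') (pd a (pd b g) y) < e"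
    using d2(2)[of w] d1(2)[of w'] w(1) w'(1) h by linarith+
  then show ?thesis using eq by (simp add: dist_real_def)
qed

lemma pd_commute:
  fixes y :: "real^'n::finite"
  assumes "smooth_on S g" "open S" "y \<in> S"
  shows "pd a (pd b g) y = pd b (pd a g) y"
proof -
  have "\<bar>pd a (pd b g) y - pd b (pd a g) y\<bar> \<le> 0"
  proof (rule field_le_epsilon)
    fix e :: real assume "e > 0"
    then show "\<bar>pd a (pd b g) y - pd b (pd a g) y\<bar> \<le> 0 + e"
      using pd_commute_approx[OF assms, of "e / 2"] by simp
  qed
  then show ?thesis by simp
qed

lemma dlist_move_to_front:
  assumes sm: "smooth_on S g" and S: "open S" "y \<in> S"
  shows "dlist (p @ a # q) g y = dlist (a # p @ q) g y"
  using S(2)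
proof (induction p arbitrary: y)
  case (Cons b p)
  have "dlist ((b # p) @ a # q) g y = pd b (dlist (a # p @ q) g) y"
    by (simp, rule pd_cong_open[OF S(1) Cons.prems]) (use Cons.IH in auto)
  also have "\<dots> = pd a (pd b (dlist (p @ q) g)) y"
    using pd_commute[OF smooth_on_dlist[OF sm] S(1) Cons.prems] by simp
  finally show ?case by simp
qed simp

lemma dlist_perm:
  assumes sm: "smooth_on S g" and S: "open S" "y \<in> S" and mset: "mset es = mset es'"
  shows "dlist es g y = dlist es' g y"
  using S(2) mset
proof (induction es arbitrary: es' y)
  case (Cons a es)
  then have "a \<in> set es'" by (metis list.set_intros(1) set_mset_mset)
  then obtain p q where es': "es' = p @ a # q" by (meson split_list)
  then have "mset es = mset (p @ q)" using Cons.prems(2) by simp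
  then have "dlist (a # es) g y = dlist (a # p @ q) g y"
    by (simp, intro pd_cong_open[OF S(1) Cons.prems(1)] Cons.IH)
  also have "\<dots> = dlist es' g y" using dlist_move_to_front[OF sm S(1) Cons.prems(1)] es' by simp
  finally show ?case .
qed simp

lemma pmulti_obtain_dlist:
  fixes \<alpha> :: "'n::finite \<Rightarrow> nat"
  obtains xs where "pmulti \<alpha> f = dlist xs f" "count_list xs = \<alpha>" "mlen \<alpha> = length xs"
proof -
  obtain ys where ys: "mset ys = (\<Sum>i\<in>UNIV. replicate_mset (\<alpha> i) i)" using ex_mset by blast
  have "count_list ys i = \<alpha> i" for i
    using arg_cong[OF ys, of "\<lambda>A. count A i"] by (simp add: count_mset count_sum)
  then have ex: "\<exists>xs. \<forall>i. count_list xs i = \<alpha> i" by blast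
  define xs where "xs = (SOME xs. \<forall>i. count_list xs i = \<alpha> i)"
  have count: "count_list xs = \<alpha>" using someI_ex[OF ex] by (auto simp: xs_def)
  moreover have "pmulti \<alpha> f = dlist xs f" by (simp add: pmulti_def xs_def)
  moreover have "mlen \<alpha> = length xs" using sum_count_set[of xs UNIV] count by (simp add: mlen_def)
  ultimately show ?thesis using that by blast
qed

lemma dlist_bound_from_pmulti:
  fixes u :: "real^'n::finite \<Rightarrow> real"
  assumes "smooth_on S u" "open S" "y \<in> S" and bound: "\<And>\<alpha>. \<bar>pmulti \<alpha> u y\<bar> \<le> B (mlen \<alpha>)"
  shows "\<bar>dlist es u y\<bar> \<le> B (length es)"
proof -
  obtain xs where xs: "pmulti (count_list es) u = dlist xs u" "count_list xs = count_list es"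
      "mlen (count_list es) = length xs"
    by (rule pmulti_obtain_dlist)
  have "mset es = mset xs" using xs(2) by (simp add: multiset_eq_iff count_mset)
  then have "dlist es u y = dlist xs u y" "length xs = length es"
    using dlist_perm[OF assms(1-3)] mset_eq_length by metis+
  then show ?thesis using bound[of "count_list es"] xs(1,3) by simp
qed

lemma pmulti_bound_from_dlist:
  fixes f :: "real^'n::finite \<Rightarrow> real"
  assumes "\<And>es. \<bar>dlist es f y\<bar> \<le> B (length es)"
  shows "\<bar>pmulti \<alpha> f y\<bar> \<le> B (mlen \<alpha>)"
proof -
  obtain xs where "pmulti \<alpha> f = dlist xs f" "mlen \<alpha> = length xs" by (rule pmulti_obtain_dlist)
  then show ?thesis using assms[of xs] by simp
qed

subsection \<open>Continuous partial derivatives give a Frechet derivative\<close>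

definition coord_proj :: "'m::finite set \<Rightarrow> real^'m \<Rightarrow> real^'m" where
  "coord_proj A h = (\<chi> i. if i \<in> A then h$i else 0)"

lemma bounded_linear_coord_proj: "bounded_linear (coord_proj A)"
  unfolding linear_conv_bounded_linear[symmetric]
  by (rule linearI) (auto simp: coord_proj_def vec_eq_iff)

lemma norm_coord_proj_le: "norm (coord_proj A h) \<le> norm h"
  by (rule norm_le_componentwise_cart) (auto simp: coord_proj_def)

lemma coord_proj_0 [simp]: "coord_proj A 0 = 0"
  by (simp add: coord_proj_def vec_eq_iff)

lemma coord_proj_insert: "i \<notin> A \<Longrightarrow> coord_proj (insert i A) h = coord_proj A h + h$i *\<^sub>R axis i 1"
  by (auto simp: coord_proj_def vec_eq_iff axis_def)

lemma coord_proj_line_in_ball: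
  fixes y :: "real^'m::finite"
  assumes "norm a < r/2" "\<bar>b\<bar> < r/2"
  shows "y + coord_proj A a + b *\<^sub>R axis i 1 \<in> ball y r"
proof -
  have "norm (coord_proj A a + b *\<^sub>R axis i 1) \<le> norm (coord_proj A a) + norm (b *\<^sub>R (axis i 1 :: real^'m))"
    by (rule norm_triangle_ineq)
  also have "\<dots> < r" using norm_coord_proj_le[of A a] assms by simp
  finally have "norm (coord_proj A a + b *\<^sub>R axis i 1) < r" .
  moreover have "dist y (y + (coord_proj A a + b *\<^sub>R axis i 1)) = norm (coord_proj A a + b *\<^sub>R axis i 1)"
    by (metis add_diff_cancel_left' dist_commute dist_norm)
  ultimately show ?thesis by (simp add: add.assoc)
qed

lemma continuous_pd_coord_proj_line:
  fixes g :: "real^'m::finite \<Rightarrow> real"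
  assumes "isCont (pd i g) y"
  shows "continuous (at (0, 0) within Z)
    (\<lambda>(a, b). blinfun_mult_right (pd i g (y + coord_proj A a + b *\<^sub>R axis i 1)))"
proof -
  have inner: "continuous (at (0, 0) within Z)
      (\<lambda>p::(real^'m) \<times> real. y + coord_proj A (fst p) + snd p *\<^sub>R axis i 1)"
    by (intro continuous_intros bounded_linear.continuous[OF bounded_linear_coord_proj])
  have "continuous (at (0, 0) within Z) (\<lambda>p. pd i g (y + coord_proj A (fst p) + snd p *\<^sub>R axis i 1))"
    using continuous_within_compose3[where g="pd i g", OF _ inner] assms by simp
  from bounded_linear.continuous[OF bounded_linear_blinfun_mult_right this] show ?thesis
    by (simp add: case_prod_unfold)
qed

lemma has_derivative_diagonal_coord:
  fixes f :: "real^'m::finite \<Rightarrow> real \<Rightarrow> real"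
  assumes "((\<lambda>(a, b). f a b) has_derivative (\<lambda>(ta, tb). L ta + tb * c)) (at (0, 0))"
  shows "((\<lambda>h. f h (h$i)) has_derivative (\<lambda>h. L h + h$i * c)) (at 0)"
proof -
  have "((\<lambda>h::real^'m. (h, h$i)) has_derivative (\<lambda>h. (h, h$i))) (at 0)"
    by (intro has_derivative_Pair has_derivative_ident bounded_linear_imp_has_derivative
        bounded_linear_vec_nth)
  from diff_chain_at[OF this] assms
  have "(((\<lambda>(a, b). f a b) \<circ> (\<lambda>h. (h, h$i))) has_derivative
      ((\<lambda>(ta, tb). L ta + tb * c) \<circ> (\<lambda>h. (h, h$i)))) (at 0)"
    by simp
  then show ?thesis by (simp add: o_def)
qed

lemma has_derivative_coord_proj_insert:
  fixes g :: "real^'m::finite \<Rightarrow> real"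
  assumes sm: "smooth_on S g" and S: "open S" "y \<in> S" and i: "i \<notin> A"
    and IH: "((\<lambda>h. g (y + coord_proj A h)) has_derivative (\<lambda>h. \<Sum>j\<in>A. h$j * pd j g y)) (at 0)"
  shows "((\<lambda>h. g (y + coord_proj (insert i A) h)) has_derivative
           (\<lambda>h. \<Sum>j\<in>insert i A. h$j * pd j g y)) (at 0)"
proof -
  obtain r where r: "r > 0" "ball y r \<subseteq> S" using S open_contains_ball by blast
  define X where "X = ball (0::real^'m) (r/2)"
  define Y where "Y = ball (0::real) (r/2)"
  define f where "f a b = g (y + coord_proj A a + b *\<^sub>R axis i 1)" for a b
  have fx: "((\<lambda>a. f a 0) has_derivative (\<lambda>h. \<Sum>j\<in>A. h$j * pd j g y)) (at 0 within X)"
    using IH by (simp add: f_def has_derivative_at_withinI)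
  have "y + coord_proj A a + b *\<^sub>R axis i 1 \<in> S" if "a \<in> X" "b \<in> Y" for a b
    using coord_proj_line_in_ball[of a r b y A i] that r(2) by (auto simp: X_def Y_def)
  then have fy: "((\<lambda>b. f a b) has_derivative
      blinfun_apply (blinfun_mult_right (pd i g (y + coord_proj A a + b *\<^sub>R axis i 1)))) (at b within Y)"
    if "a \<in> X" "b \<in> Y" for a b
    using smooth_on_DERIV_line_at[OF sm, of _ _ i "[]"] that
    by (auto simp: f_def has_field_derivative_def intro: has_derivative_at_withinI)
  have "isCont (pd i g) y"
    using smooth_on_continuous_dlist[OF sm, of "[i]"] S by (simp add: continuous_on_eq_continuous_at)
  note cont = continuous_pd_coord_proj_line[OF this, of "X \<times> Y" A]
  have "0 \<in> Y" "convex Y" using r by (auto simp: Y_def)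
  from has_derivative_partialsI[OF fx fy cont this]
  have "((\<lambda>(a, b). f a b) has_derivative
      (\<lambda>(ta, tb). (\<Sum>j\<in>A. ta$j * pd j g y) + tb * pd i g y)) (at (0, 0) within X \<times> Y)"
    by (simp add: mult.commute)
  moreover have "at (0, 0) within X \<times> Y = at (0, 0)"
    using r by (intro at_within_open) (auto simp: X_def Y_def open_Times)
  ultimately have "((\<lambda>(a, b). f a b) has_derivative
      (\<lambda>(ta, tb). (\<Sum>j\<in>A. ta$j * pd j g y) + tb * pd i g y)) (at (0, 0))"
    by simp
  from has_derivative_diagonal_coord[OF this] show ?thesis
    using i by (simp add: f_def coord_proj_insert add.assoc add.commute)
qed

lemma has_derivative_coord_proj:
  fixes g :: "real^'m::finite \<Rightarrow> real"
  assumes "smooth_on S g" "open S" "y \<in> S"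
  shows "((\<lambda>h. g (y + coord_proj A h)) has_derivative (\<lambda>h. \<Sum>j\<in>A. h$j * pd j g y)) (at 0)"
proof (induction A rule: finite_induct[OF finite])
  case 1
  have "coord_proj {} h = 0" for h :: "real^'m" by (simp add: coord_proj_def vec_eq_iff)
  then show ?case by simp
next
  case (2 i A)
  then show ?case using has_derivative_coord_proj_insert[OF assms] by blast
qed

lemma smooth_on_has_derivative:
  fixes g :: "real^'m::finite \<Rightarrow> real"
  assumes "smooth_on S g" "open S" "y \<in> S"
  shows "(g has_derivative (\<lambda>h. \<Sum>i\<in>UNIV. h$i * pd i g y)) (at y)"
proof -
  have "coord_proj UNIV h = h" for h :: "real^'m" by (simp add: coord_proj_def vec_eq_iff)
  then have "((\<lambda>h. g (y + h)) has_derivative (\<lambda>h. \<Sum>i\<in>UNIV. h$i * pd i g y)) (at 0)"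
    using has_derivative_coord_proj[OF assms, of UNIV] by simp
  moreover have "((\<lambda>x. x - y) has_derivative (\<lambda>h. h)) (at y)"
    by (intro derivative_eq_intros) auto
  ultimately have "(((\<lambda>h. g (y + h)) \<circ> (\<lambda>x. x - y)) has_derivative
      ((\<lambda>h. \<Sum>i\<in>UNIV. h$i * pd i g y) \<circ> (\<lambda>h. h))) (at y)"
    using diff_chain_at by fastforce
  then show ?thesis by (simp add: o_def)
qed

subsection \<open>The chain rule for iterated partial derivatives\<close>

definition univ_list :: "'a::finite list" where
  "univ_list = (SOME xs. distinct xs \<and> set xs = UNIV)"

lemma distinct_univ_list: "distinct (univ_list :: 'a::finite list)"
  and set_univ_list: "set (univ_list :: 'a::finite list) = UNIV"
proof -
  have "\<exists>xs :: 'a list. distinct xs \<and> set xs = UNIV"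
    using finite_distinct_list[of "UNIV :: 'a set"] by auto
  from someI_ex[OF this] show "distinct (univ_list :: 'a list)" "set (univ_list :: 'a list) = UNIV"
    unfolding univ_list_def by auto
qed

lemma sum_list_map_univ_list: "sum_list (map f (univ_list :: 'a::finite list)) = (\<Sum>i\<in>UNIV. f i)"
  using sum_list_distinct_conv_sum_set[OF distinct_univ_list] by (simp add: set_univ_list)

lemma length_univ_list: "length (univ_list :: 'a::finite list) = CARD('a)"
  using distinct_card[OF distinct_univ_list[where 'a='a]] by (simp add: set_univ_list)

lemma sum_list_concat: "sum_list (concat xss) = sum_list (map sum_list (xss :: 'a::monoid_add list list))"
  by (induction xss) auto

text \<open>A term \<open>(es, ps)\<close> stands for \<open>\<partial>\<^bsup>es\<^esup>u(F x)\<close> times the product of the factors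
  \<open>\<partial>\<^bsup>fs\<^esup>F\<^sub>j(x)\<close> with \<open>(fs, j) \<in> ps\<close>. Differentiating it in direction \<open>d\<close> either hits the outer
  factor, which creates a new factor \<open>\<partial>\<^sub>dF\<^sub>m(x)\<close> for every \<open>m\<close>, or adds \<open>d\<close> to one inner factor.\<close>

type_synonym ('n, 'm) chain_term = "'m list \<times> ('n list \<times> 'm) list"

definition term_val ::
    "(real^'m::finite \<Rightarrow> real) \<Rightarrow> (real^'n::finite \<Rightarrow> real^'m) \<Rightarrow> ('n, 'm) chain_term \<Rightarrow> real^'n \<Rightarrow> real"
  where "term_val u F t x =
    dlist (fst t) u (F x) * prod_list (map (\<lambda>p. dlist (fst p) (\<lambda>y. F y $ snd p) x) (snd t))"

definition term_deriv :: "'n \<Rightarrow> ('n, 'm::finite) chain_term \<Rightarrow> ('n, 'm) chain_term list" where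
  "term_deriv d t = map (\<lambda>m. (m # fst t, ([d], m) # snd t)) univ_list @
     map (\<lambda>l. (fst t, (snd t)[l := (d # fst (snd t ! l), snd (snd t ! l))])) [0..<length (snd t)]"

primrec chain_terms :: "'n list \<Rightarrow> ('n, 'm::finite) chain_term list" where
  "chain_terms [] = [([], [])]"
| "chain_terms (d # ds) = concat (map (term_deriv d) (chain_terms ds))"

lemma DERIV_prod_list:
  fixes \<phi> :: "'a \<Rightarrow> real \<Rightarrow> real"
  assumes "\<And>p. p \<in> set ps \<Longrightarrow> DERIV (\<phi> p) x :> \<phi> (\<delta> p) x"
  shows "DERIV (\<lambda>t. prod_list (map (\<lambda>p. \<phi> p t) ps)) x :>
     (\<Sum>l<length ps. prod_list (map (\<lambda>p. \<phi> p x) (ps[l := \<delta> (ps ! l)])))"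
  using assms
proof (induction ps)
  case (Cons p ps)
  then have "DERIV (\<lambda>t. \<phi> p t * prod_list (map (\<lambda>p. \<phi> p t) ps)) x :>
     \<phi> (\<delta> p) x * prod_list (map (\<lambda>p. \<phi> p x) ps) +
     \<phi> p x * (\<Sum>l<length ps. prod_list (map (\<lambda>p. \<phi> p x) (ps[l := \<delta> (ps ! l)])))"
    by (auto intro!: derivative_eq_intros)
  then show ?case
    unfolding length_Cons sum.lessThan_Suc_shift by (simp add: sum_distrib_left)
qed simp

lemma DERIV_sum_list:
  fixes f :: "'a \<Rightarrow> real \<Rightarrow> real"
  assumes "\<And>p. p \<in> set ps \<Longrightarrow> DERIV (f p) x :> f' p"
  shows "DERIV (\<lambda>t. sum_list (map (\<lambda>p. f p t) ps)) x :> sum_list (map f' ps)"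
  using assms by (induction ps) (auto intro!: derivative_eq_intros)

lemma has_derivative_line_vec:
  fixes F :: "real^'n::finite \<Rightarrow> real^'m::finite"
  assumes "\<And>j. ((\<lambda>s. F (x + s *\<^sub>R v) $ j) has_real_derivative V $ j) (at 0)"
  shows "((\<lambda>s. F (x + s *\<^sub>R v)) has_derivative (\<lambda>s. s *\<^sub>R V)) (at 0)"
proof -
  have "((\<lambda>s. F (x + s *\<^sub>R v) $ j) has_derivative (\<lambda>s. V $ j * s)) (at 0)" for j
    using assms[of j] by (simp add: has_field_derivative_def)
  then have "((\<lambda>s. F (x + s *\<^sub>R v) \<bullet> axis j 1) has_derivative (\<lambda>s. (s *\<^sub>R V) \<bullet> axis j 1)) (at 0)" for j
    by (simp add: inner_axis mult.commute)
  then show ?thesis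
    by (intro has_derivative_componentwise_within[THEN iffD2]) (auto simp: Basis_vec_def)
qed

lemma DERIV_comp_line:
  fixes F :: "real^'n::finite \<Rightarrow> real^'m::finite"
  assumes su: "smooth_on \<Omega>2 u" "open \<Omega>2"
    and sF: "\<And>j. smooth_on \<Omega>1 (\<lambda>y. F y $ j)" and x: "x \<in> \<Omega>1" "F x \<in> \<Omega>2"
  shows "DERIV (\<lambda>s. dlist es u (F (x + s *\<^sub>R axis d 1))) 0 :>
     (\<Sum>m\<in>UNIV. dlist (m # es) u (F x) * pd d (\<lambda>y. F y $ m) x)"
proof -
  define V where "V = (\<chi> m. pd d (\<lambda>y. F y $ m) x)"
  have "((\<lambda>s. F (x + s *\<^sub>R axis d 1) $ j) has_real_derivative V $ j) (at 0)" for j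
    using smooth_on_DERIV_line[OF sF x(1), of "[]"] by (simp add: V_def)
  then have "((\<lambda>s. F (x + s *\<^sub>R axis d 1)) has_derivative (\<lambda>s. s *\<^sub>R V)) (at 0)"
    by (rule has_derivative_line_vec)
  moreover have "(dlist es u has_derivative (\<lambda>h. \<Sum>m\<in>UNIV. h$m * dlist (m # es) u (F x)))
      (at (F (x + 0 *\<^sub>R axis d 1)))"
    using smooth_on_has_derivative[OF smooth_on_dlist[OF su(1)] su(2) x(2)] by simp
  ultimately have "((\<lambda>s. dlist es u (F (x + s *\<^sub>R axis d 1))) has_derivative
      (\<lambda>s. \<Sum>m\<in>UNIV. (s *\<^sub>R V) $ m * dlist (m # es) u (F x))) (at 0)"
    using diff_chain_at by (fastforce simp: o_def)
  moreover have "(\<lambda>s. \<Sum>m\<in>UNIV. (s *\<^sub>R V) $ m * dlist (m # es) u (F x)) =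
      (*) (\<Sum>m\<in>UNIV. dlist (m # es) u (F x) * pd d (\<lambda>y. F y $ m) x)"
    by (auto simp: fun_eq_iff sum_distrib_left V_def algebra_simps)
  ultimately show ?thesis by (simp add: has_field_derivative_def)
qed

lemma term_val_DERIV:
  fixes F :: "real^'n::finite \<Rightarrow> real^'m::finite"
  assumes su: "smooth_on \<Omega>2 u" "open \<Omega>2"
    and sF: "\<And>j. smooth_on \<Omega>1 (\<lambda>y. F y $ j)" and x: "x \<in> \<Omega>1" "F x \<in> \<Omega>2"
  shows "DERIV (\<lambda>s. term_val u F t (x + s *\<^sub>R axis d 1)) 0 :>
    sum_list (map (\<lambda>t'. term_val u F t' x) (term_deriv d t))"
proof -
  obtain es ps where t: "t = (es, ps)" by fastforce
  define \<phi> where "\<phi> p s = dlist (fst p) (\<lambda>y. F y $ snd p) (x + s *\<^sub>R axis d 1)" for p s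
  define \<delta> where "\<delta> p = (d # fst p, snd p)" for p :: "'n list \<times> 'm"
  have "DERIV (\<phi> p) 0 :> \<phi> (\<delta> p) 0" for p
    unfolding \<phi>_def \<delta>_def using smooth_on_DERIV_line[OF sF x(1)] by simp
  then have "DERIV (\<lambda>s. prod_list (map (\<lambda>p. \<phi> p s) ps)) 0 :>
      (\<Sum>l<length ps. prod_list (map (\<lambda>p. \<phi> p 0) (ps[l := \<delta> (ps ! l)])))"
    by (intro DERIV_prod_list)
  from DERIV_mult[OF DERIV_comp_line[OF su sF x, of es d] this]
  have "DERIV (\<lambda>s. term_val u F t (x + s *\<^sub>R axis d 1)) 0 :>
    (\<Sum>m\<in>UNIV. dlist (m # es) u (F x) * pd d (\<lambda>y. F y $ m) x) * prod_list (map (\<lambda>p. \<phi> p 0) ps)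
    + dlist es u (F x) * (\<Sum>l<length ps. prod_list (map (\<lambda>p. \<phi> p 0) (ps[l := \<delta> (ps ! l)])))"
    by (simp add: term_val_def t \<phi>_def mult.commute)
  moreover have "sum_list (map (\<lambda>t'. term_val u F t' x) (map (\<lambda>m. (m # es, ([d], m) # ps)) univ_list))
    = (\<Sum>m\<in>UNIV. dlist (m # es) u (F x) * pd d (\<lambda>y. F y $ m) x) * prod_list (map (\<lambda>p. \<phi> p 0) ps)"
    by (simp add: o_def sum_list_map_univ_list term_val_def \<phi>_def sum_distrib_right mult.assoc)
  moreover have "sum_list (map (\<lambda>t'. term_val u F t' x)
      (map (\<lambda>l. (es, ps[l := (d # fst (ps ! l), snd (ps ! l))])) [0..<length ps]))
    = dlist es u (F x) * (\<Sum>l<length ps. prod_list (map (\<lambda>p. \<phi> p 0) (ps[l := \<delta> (ps ! l)])))"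
    by (simp add: o_def term_val_def \<phi>_def \<delta>_def interv_sum_list_conv_sum_set_nat
        atLeast0LessThan sum_distrib_left)
  ultimately show ?thesis unfolding term_deriv_def t by simp
qed

lemma sum_chain_terms_DERIV:
  fixes F :: "real^'n::finite \<Rightarrow> real^'m::finite"
  assumes "smooth_on \<Omega>2 u" "open \<Omega>2" "\<And>j. smooth_on \<Omega>1 (\<lambda>y. F y $ j)" "x \<in> \<Omega>1" "F x \<in> \<Omega>2"
  shows "DERIV (\<lambda>s. sum_list (map (\<lambda>t. term_val u F t (x + s *\<^sub>R axis d 1)) (chain_terms ds))) 0 :>
    sum_list (map (\<lambda>t. term_val u F t x) (chain_terms (d # ds)))"
  using DERIV_sum_list[OF term_val_DERIV[OF assms]]
  by (simp add: sum_list_concat map_concat o_def)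

theorem dlist_comp_eq_sum_chain_terms:
  fixes F :: "real^'n::finite \<Rightarrow> real^'m::finite"
  assumes su: "smooth_on \<Omega>2 u" "open \<Omega>2" and \<Omega>1: "open \<Omega>1"
    and sF: "\<And>j. smooth_on \<Omega>1 (\<lambda>y. F y $ j)" and F: "F ` \<Omega>1 \<subseteq> \<Omega>2" and x: "x \<in> \<Omega>1"
  shows "dlist ds (u \<circ> F) x = sum_list (map (\<lambda>t. term_val u F t x) (chain_terms ds))"
  using x
proof (induction ds arbitrary: x)
  case (Cons d ds)
  have "dlist (d # ds) (u \<circ> F) x = pd d (\<lambda>x. sum_list (map (\<lambda>t. term_val u F t x) (chain_terms ds))) x"
    by (simp, rule pd_cong_open[OF \<Omega>1 Cons.prems]) (use Cons.IH in \<open>auto simp: o_def\<close>)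
  also have "\<dots> = sum_list (map (\<lambda>t. term_val u F t x) (chain_terms (d # ds)))"
    using sum_chain_terms_DERIV[OF su sF Cons.prems] F Cons.prems by (intro pd_eqI) auto
  finally show ?case .
qed (simp add: term_val_def)

lemma continuous_on_prod_list_map:
  fixes f :: "'a \<Rightarrow> 'b::topological_space \<Rightarrow> real"
  shows "(\<And>p. p \<in> set ps \<Longrightarrow> continuous_on S (f p)) \<Longrightarrow>
    continuous_on S (\<lambda>x. prod_list (map (\<lambda>p. f p x) ps))"
  by (induction ps) (auto intro!: continuous_intros)

lemma continuous_on_sum_list_map:
  fixes f :: "'a \<Rightarrow> 'b::topological_space \<Rightarrow> real"
  shows "(\<And>p. p \<in> set ps \<Longrightarrow> continuous_on S (f p)) \<Longrightarrow>
    continuous_on S (\<lambda>x. sum_list (map (\<lambda>p. f p x) ps))"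
  by (induction ps) (auto intro!: continuous_intros)

lemma smooth_on_components_continuous:
  fixes F :: "real^'n::finite \<Rightarrow> real^'m::finite"
  assumes "\<And>j. smooth_on S (\<lambda>y. F y $ j)"
  shows "continuous_on S F"
  using continuous_on_vec_lambda[of S "\<lambda>j x. F x $ j"] smooth_on_continuous_dlist[OF assms, of "[]"]
  by simp

theorem smooth_on_comp:
  fixes F :: "real^'n::finite \<Rightarrow> real^'m::finite"
  assumes su: "smooth_on \<Omega>2 u" "open \<Omega>2" and \<Omega>1: "open \<Omega>1"
    and sF: "\<And>j. smooth_on \<Omega>1 (\<lambda>y. F y $ j)" and F: "F ` \<Omega>1 \<subseteq> \<Omega>2"
  shows "smooth_on \<Omega>1 (u \<circ> F)"
  unfolding smooth_on_def
proof (intro allI conjI ballI)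
  fix ds :: "'n list"
  note expand = dlist_comp_eq_sum_chain_terms[OF su \<Omega>1 sF F]
  have "continuous_on \<Omega>1 (\<lambda>x. term_val u F t x)" for t :: "('n, 'm) chain_term"
    unfolding term_val_def
    by (intro continuous_intros continuous_on_prod_list_map smooth_on_continuous_dlist[OF sF]
        continuous_on_compose2[OF smooth_on_continuous_dlist[OF su(1)]
          smooth_on_components_continuous[OF sF] F])
  then have "continuous_on \<Omega>1 (\<lambda>x. sum_list (map (\<lambda>t. term_val u F t x) (chain_terms ds)))"
    by (intro continuous_on_sum_list_map)
  then show "continuous_on \<Omega>1 (dlist ds (u \<circ> F))"
    by (rule continuous_on_eq) (use expand in auto)
  fix i x assume x: "x \<in> \<Omega>1"
  have "DERIV (\<lambda>s. dlist ds (u \<circ> F) (x + s *\<^sub>R axis i 1)) 0 :>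
      sum_list (map (\<lambda>t. term_val u F t x) (chain_terms (i # ds)))"
    using sum_chain_terms_DERIV[OF su sF x] F x by (intro DERIV_line_cong_open[OF \<Omega>1 x expand]) auto
  then show "(\<lambda>s. dlist ds (u \<circ> F) (x + s *\<^sub>R axis i 1)) differentiable (at 0)"
    using real_differentiable_def by blast
qed

subsection \<open>Counting the terms of the expansion\<close>

definition inner_order :: "('n list \<times> 'm) list \<Rightarrow> nat" where
  "inner_order ps = sum_list (map (\<lambda>p. length (fst p)) ps)"

lemma sum_list_map_update_nat:
  fixes f :: "'a \<Rightarrow> nat"
  shows "l < length xs \<Longrightarrow> sum_list (map f (xs[l := y])) + f (xs ! l) = sum_list (map f xs) + f y"
  by (induction xs arbitrary: l) (auto split: nat.splits)

lemma prod_list_map_update: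
  fixes f :: "'a \<Rightarrow> 'b::comm_semiring_1"
  shows "l < length xs \<Longrightarrow> f y = c * f (xs ! l) \<Longrightarrow> prod_list (map f (xs[l := y])) = c * prod_list (map f xs)"
  by (induction xs arbitrary: l) (auto split: nat.splits simp: ac_simps)

lemma chain_terms_invariant:
  "t \<in> set (chain_terms ds) \<Longrightarrow>
    length (fst t) = length (snd t) \<and> inner_order (snd t) = length ds \<and> (\<forall>p\<in>set (snd t). fst p \<noteq> [])"
proof (induction ds arbitrary: t)
  case (Cons d ds)
  from Cons.prems obtain es ps where t0: "(es, ps) \<in> set (chain_terms ds)" "t \<in> set (term_deriv d (es, ps))"
    by auto
  note IH = Cons.IH[OF t0(1)]
  from t0(2) consider (outer) m where "t = (m # es, ([d], m) # ps)"
    | (inner) l where "l < length ps" "t = (es, ps[l := (d # fst (ps ! l), snd (ps ! l))])"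
    unfolding term_deriv_def by auto
  then show ?case
  proof cases
    case inner
    have "inner_order (ps[l := (d # fst (ps ! l), snd (ps ! l))]) = Suc (inner_order ps)"
      unfolding inner_order_def
      using sum_list_map_update_nat[OF inner(1), of "\<lambda>p. length (fst p)" "(d # fst (ps ! l), snd (ps ! l))"]
      by simp
    moreover have "\<forall>p\<in>set (ps[l := (d # fst (ps ! l), snd (ps ! l))]). fst p \<noteq> []"
      using IH by (auto dest!: set_update_subset_insert[THEN subsetD])
    ultimately show ?thesis using IH inner by auto
  qed (use IH in \<open>auto simp: inner_order_def\<close>)
qed (auto simp: inner_order_def)

lemma length_le_inner_order: "\<forall>p\<in>set ps. fst p \<noteq> [] \<Longrightarrow> length ps \<le> inner_order ps"
proof (induction ps)
  case (Cons p ps)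
  then have "length ps \<le> inner_order ps" "length (fst p) \<ge> 1" by (auto simp: Suc_le_eq)
  then show ?case by (simp add: inner_order_def)
qed (simp add: inner_order_def)

lemma length_chain_term_le:
  "t \<in> set (chain_terms ds) \<Longrightarrow> length (fst t) \<le> length ds"
  using chain_terms_invariant[of t ds] length_le_inner_order[of "snd t"] by auto

text \<open>Each factor \<open>\<partial>\<^bsup>fs\<^esup>F\<^sub>j\<close> is weighted by a Cauchy estimate \<open>C R\<^bsup>|fs|\<^esup> |fs|!\<close>. Summing the weights of
  the terms of \<open>chain_terms ds\<close> with \<open>|es| = j\<close> gives \<open>(n C)\<^sup>j R\<^sup>k L(k, j)\<close>, where \<open>k = |ds|\<close>, \<open>n\<close> is
  the dimension of the target and \<open>L(k, j)\<close> are the unsigned Lah numbers.\<close>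

definition cauchy_bound :: "real \<Rightarrow> real \<Rightarrow> nat \<Rightarrow> real" where
  "cauchy_bound C R l = C * R^l * fact l"

definition term_weight :: "(nat \<Rightarrow> real) \<Rightarrow> ('n, 'm) chain_term \<Rightarrow> real" where
  "term_weight b t = prod_list (map (\<lambda>p. b (length (fst p))) (snd t))"

definition weight_sum :: "'m::finite itself \<Rightarrow> (nat \<Rightarrow> real) \<Rightarrow> 'n list \<Rightarrow> nat \<Rightarrow> real" where
  "weight_sum _ b ds j = sum_list (map (\<lambda>t. if length (fst t) = j then term_weight b t else 0)
     (chain_terms ds :: ('n, 'm) chain_term list))"

fun lah :: "nat \<Rightarrow> nat \<Rightarrow> real" where
  "lah 0 j = (if j = 0 then 1 else 0)"
| "lah (Suc k) j = (if j = 0 then 0 else lah k (j - 1)) + (k + j) * lah k j"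

lemma cauchy_bound_Suc: "cauchy_bound C R (Suc l) = R * Suc l * cauchy_bound C R l"
  by (simp add: cauchy_bound_def algebra_simps)

lemma term_weight_inner_deriv:
  fixes C R :: real
  assumes "l < length ps"
  shows "term_weight (cauchy_bound C R) (es, ps[l := (d # fst (ps ! l), snd (ps ! l))])
    = R * Suc (length (fst (ps ! l))) * term_weight (cauchy_bound C R) (es, ps)"
  unfolding term_weight_def using assms by (simp add: prod_list_map_update cauchy_bound_Suc)

lemma weight_sum_term_deriv:
  fixes t :: "('n, 'm::finite) chain_term" and C R :: real
  assumes "length (fst t) = length (snd t)" "inner_order (snd t) = k"
  defines "w \<equiv> term_weight (cauchy_bound C R)"
  shows "sum_list (map (\<lambda>t'. if length (fst t') = j then w t' else 0) (term_deriv d t))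
    = (if Suc (length (fst t)) = j then CARD('m) * (C * R) * w t else 0)
      + (if length (fst t) = j then R * real (k + j) * w t else 0)"
proof -
  obtain es ps where t: "t = (es, ps)" by fastforce
  have outer: "sum_list (map (\<lambda>t'. if length (fst t') = j then w t' else 0)
      (map (\<lambda>m. (m # es, ([d], m) # ps)) (univ_list :: 'm list)))
    = (if Suc (length es) = j then CARD('m) * (C * R) * w t else 0)"
    by (simp add: o_def w_def term_weight_def t cauchy_bound_def sum_list_triv length_univ_list)
  have "inner_order ps = (\<Sum>l<length ps. length (fst (ps ! l)))"
    unfolding inner_order_def by (simp add: sum_list_sum_nth atLeast0LessThan)
  then have "(\<Sum>l<length ps. Suc (length (fst (ps ! l)))) = k + length ps"
    using assms(2) t by (simp add: sum_Suc)
  then have "(\<Sum>l<length ps. real (Suc (length (fst (ps ! l))))) = real (k + length ps)"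
    by (metis of_nat_sum)
  moreover have "(\<Sum>l<length ps. R * Suc (length (fst (ps ! l))) * w t)
      = R * (\<Sum>l<length ps. real (Suc (length (fst (ps ! l))))) * w t"
    by (simp only: sum_distrib_left sum_distrib_right)
  ultimately have "(\<Sum>l<length ps. R * Suc (length (fst (ps ! l))) * w t) = R * real (k + length ps) * w t"
    by simp
  then have inner: "sum_list (map (\<lambda>t'. if length (fst t') = j then w t' else 0)
      (map (\<lambda>l. (es, ps[l := (d # fst (ps ! l), snd (ps ! l))])) [0..<length ps]))
    = (if length es = j then R * real (k + j) * w t else 0)"
    using assms(1) t
    by (auto simp: o_def w_def term_weight_inner_deriv interv_sum_list_conv_sum_set_nat
        atLeast0LessThan sum_list_triv)
  show ?thesis unfolding term_deriv_def t using outer inner t by simp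
qed

lemma sum_list_if_Suc_eq:
  fixes f :: "'a \<Rightarrow> real"
  shows "sum_list (map (\<lambda>t. if Suc (g t) = j then f t else 0) xs)
    = (if j = 0 then 0 else sum_list (map (\<lambda>t. if g t = j - 1 then f t else 0) xs))"
  by (cases j) (simp_all add: sum_list_triv)

lemma sum_list_map_if_mult:
  "sum_list (map (\<lambda>t. if P t then c * f t else 0) xs) = (c::'a::semiring_0) * sum_list (map (\<lambda>t. if P t then f t else 0) xs)"
  by (induction xs) (auto simp: distrib_left)

lemma weight_sum_Cons:
  fixes ds :: "'n list" and C R :: real
  shows "weight_sum TYPE('m::finite) (cauchy_bound C R) (d # ds) j =
    (if j = 0 then 0 else CARD('m) * (C * R) * weight_sum TYPE('m) (cauchy_bound C R) ds (j - 1))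
    + R * real (length ds + j) * weight_sum TYPE('m) (cauchy_bound C R) ds j"
proof -
  define w :: "('n, 'm) chain_term \<Rightarrow> real" where "w = term_weight (cauchy_bound C R)"
  let ?terms = "chain_terms ds :: ('n, 'm) chain_term list"
  have "weight_sum TYPE('m) (cauchy_bound C R) (d # ds) j
    = sum_list (map (\<lambda>t. sum_list (map (\<lambda>t'. if length (fst t') = j then w t' else 0) (term_deriv d t))) ?terms)"
    unfolding weight_sum_def w_def by (simp add: sum_list_concat map_concat o_def)
  also have "\<dots> = sum_list (map (\<lambda>t. (if Suc (length (fst t)) = j then CARD('m) * (C * R) * w t else 0)
      + (if length (fst t) = j then R * real (length ds + j) * w t else 0)) ?terms)"
    by (intro arg_cong[where f=sum_list] map_cong refl, unfold w_def, rule weight_sum_term_deriv)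
      (use chain_terms_invariant in auto)
  also have "\<dots> = sum_list (map (\<lambda>t. if Suc (length (fst t)) = j then CARD('m) * (C * R) * w t else 0) ?terms)
      + sum_list (map (\<lambda>t. if length (fst t) = j then R * real (length ds + j) * w t else 0) ?terms)"
    by (rule sum_list_addf)
  also have "\<dots> = (if j = 0 then 0 else CARD('m) * (C * R) * weight_sum TYPE('m) (cauchy_bound C R) ds (j - 1))
    + R * real (length ds + j) * weight_sum TYPE('m) (cauchy_bound C R) ds j"
    unfolding sum_list_if_Suc_eq sum_list_map_if_mult weight_sum_def w_def by simp
  finally show ?thesis .
qed

lemma weight_sum_eq_lah:
  fixes ds :: "'n list" and C R :: real
  shows "weight_sum TYPE('m::finite) (cauchy_bound C R) ds j = (CARD('m) * C)^j * R^(length ds) * lah (length ds) j"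
proof (induction ds arbitrary: j)
  case Nil
  show ?case by (simp add: weight_sum_def term_weight_def)
next
  case (Cons d ds)
  then show ?case
    by (cases j) (simp_all add: weight_sum_Cons[where 'm='m] algebra_simps)
qed

lemma lah_eq_0: "k < j \<Longrightarrow> lah k j = 0"
  by (induction k arbitrary: j) auto

lemma lah_fact_le: "lah k j * fact j \<le> (3::real)^k * fact k"
proof (induction k arbitrary: j)
  case (Suc k)
  show ?case
  proof (cases j)
    case 0
    then have "lah (Suc k) j * fact j = k * (lah k 0 * fact 0)" by simp
    also have "\<dots> \<le> real k * ((3::real)^k * fact k)" using Suc.IH[of 0] by (intro mult_left_mono) auto
    also have "\<dots> \<le> (3::real)^Suc k * fact (Suc k)" by (simp add: algebra_simps)
    finally show ?thesis .
  next
    case (Suc j')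
    show ?thesis
    proof (cases "j \<le> Suc k")
      case True
      have "lah (Suc k) j * fact j = j * (lah k j' * fact j') + (k + j) * (lah k j * fact j)"
        using Suc by (simp add: algebra_simps)
      also have "\<dots> \<le> real j * ((3::real)^k * fact k) + real (k + j) * ((3::real)^k * fact k)"
        using Suc.IH[of j'] Suc.IH[of j] by (intro add_mono mult_left_mono) auto
      also have "\<dots> = real (k + 2 * j) * ((3::real)^k * fact k)" by (simp add: algebra_simps)
      also have "\<dots> \<le> real (3 * (k + 1)) * ((3::real)^k * fact k)"
        using True by (intro mult_right_mono) auto
      also have "\<dots> = (3::real)^Suc k * fact (Suc k)" by (simp add: algebra_simps)
      finally show ?thesis .
    qed (simp add: lah_eq_0)
  qed
qed simp

lemma abs_prod_list_le:
  fixes f g :: "'a \<Rightarrow> real"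
  shows "(\<And>p. p \<in> set ps \<Longrightarrow> \<bar>f p\<bar> \<le> g p) \<Longrightarrow> \<bar>prod_list (map f ps)\<bar> \<le> prod_list (map g ps)"
proof (induction ps)
  case (Cons p ps)
  then have "\<bar>f p\<bar> * \<bar>prod_list (map f ps)\<bar> \<le> g p * prod_list (map g ps)"
    by (intro mult_mono) (auto intro: order_trans[OF abs_ge_zero])
  then show ?case by (simp add: abs_mult)
qed simp

lemma sum_list_sum_swap:
  fixes g :: "'a \<Rightarrow> 'b \<Rightarrow> 'c::comm_monoid_add"
  shows "sum_list (map (\<lambda>t. \<Sum>j\<in>A. g t j) xs) = (\<Sum>j\<in>A. sum_list (map (\<lambda>t. g t j) xs))"
  by (induction xs) (auto simp: sum.distrib)

lemma abs_term_val_le: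
  fixes F :: "real^'n::finite \<Rightarrow> real^'m::finite" and C R :: real
  assumes t: "t \<in> set (chain_terms ds)"
    and U: "\<bar>dlist (fst t) u (F x)\<bar> \<le> U (length (fst t))"
    and F: "\<And>fs j. fs \<noteq> [] \<Longrightarrow> \<bar>dlist fs (\<lambda>y. F y $ j) x\<bar> \<le> cauchy_bound C R (length fs)"
  shows "\<bar>term_val u F t x\<bar> \<le> U (length (fst t)) * term_weight (cauchy_bound C R) t"
proof -
  have "\<bar>prod_list (map (\<lambda>p. dlist (fst p) (\<lambda>y. F y $ snd p) x) (snd t))\<bar>
      \<le> term_weight (cauchy_bound C R) t"
    unfolding term_weight_def using chain_terms_invariant[OF t] F by (intro abs_prod_list_le) auto
  with U show ?thesis
    by (auto simp: term_val_def abs_mult intro: mult_mono order_trans[OF abs_ge_zero])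
qed

theorem dlist_comp_bound:
  fixes F :: "real^'n::finite \<Rightarrow> real^'m::finite" and C R :: real
  assumes expand: "dlist ds (u \<circ> F) x = sum_list (map (\<lambda>t. term_val u F t x) (chain_terms ds))"
    and U: "\<And>es. \<bar>dlist es u (F x)\<bar> \<le> U (length es)"
    and F: "\<And>fs j. fs \<noteq> [] \<Longrightarrow> \<bar>dlist fs (\<lambda>y. F y $ j) x\<bar> \<le> cauchy_bound C R (length fs)"
  shows "\<bar>dlist ds (u \<circ> F) x\<bar> \<le>
    (\<Sum>j\<le>length ds. U j * ((CARD('m) * C)^j * R^(length ds) * lah (length ds) j))"
proof -
  let ?terms = "chain_terms ds :: ('n, 'm) chain_term list"
  define w :: "('n, 'm) chain_term \<Rightarrow> real" where "w = term_weight (cauchy_bound C R)"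
  have "\<bar>dlist ds (u \<circ> F) x\<bar> \<le> sum_list (map (\<lambda>t. \<bar>term_val u F t x\<bar>) ?terms)"
    using expand sum_list_abs[of "map (\<lambda>t. term_val u F t x) ?terms"] by (simp add: o_def)
  also have "\<dots> \<le> sum_list (map (\<lambda>t. U (length (fst t)) * w t) ?terms)"
    unfolding w_def by (intro sum_list_mono abs_term_val_le U F)
  also have "\<dots> = sum_list (map (\<lambda>t. \<Sum>j\<le>length ds. U j * (if length (fst t) = j then w t else 0)) ?terms)"
    using length_chain_term_le
    by (intro arg_cong[where f=sum_list] map_cong refl) (auto simp: if_distrib sum.delta cong: if_cong)
  also have "\<dots> = (\<Sum>j\<le>length ds. U j * weight_sum TYPE('m) (cauchy_bound C R) ds j)"
    unfolding sum_list_sum_swap weight_sum_def w_def by (simp add: sum_list_const_mult)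
  finally show ?thesis by (simp add: weight_sum_eq_lah)
qed

lemma weight_sequence_quot_ge_1:
  assumes "weight_sequence M"
  shows "quot_seq M (Suc k) \<ge> 1"
proof (induction k)
  case (Suc k)
  have "quot_seq M (Suc k) \<le> quot_seq M (Suc (Suc k))" using assms by (simp add: weight_sequence_def)
  then show ?case using Suc by simp
qed (use assms in \<open>simp add: weight_sequence_def\<close>)

lemma weight_sequence_pos:
  assumes "weight_sequence M"
  shows "M k > 0"
proof (induction k)
  case (Suc k)
  then have "M (Suc k) = quot_seq M (Suc k) * M k" by (simp add: quot_seq_def)
  then show ?case using Suc weight_sequence_quot_ge_1[OF assms, of k] by simp
qed (use assms in \<open>simp add: weight_sequence_def\<close>)

lemma weight_sequence_Suc: "weight_sequence M \<Longrightarrow> M (Suc k) = quot_seq M (Suc k) * M k"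
  using weight_sequence_pos[of M k] by (simp add: quot_seq_def)

lemma weight_sequence_quot_mono:
  assumes "weight_sequence M" "1 \<le> a" "a \<le> b"
  shows "quot_seq M a \<le> quot_seq M b"
  using assms(3)
proof (induction b rule: dec_induct)
  case (step n)
  have "quot_seq M n \<le> quot_seq M (Suc n)" using assms(1,2) step.hyps(1) by (simp add: weight_sequence_def)
  then show ?case using step by simp
qed simp

lemma weight_sequence_mult_le:
  assumes ws: "weight_sequence M"
  shows "M j * M l \<le> M (j + l)"
proof (induction j)
  case (Suc j)
  have "M (Suc j) * M l = quot_seq M (Suc j) * (M j * M l)" using weight_sequence_Suc[OF ws, of j] by simp
  also have "\<dots> \<le> quot_seq M (Suc (j + l)) * M (j + l)"
    using weight_sequence_quot_mono[OF ws, of "Suc j" "Suc (j + l)"] Suc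
      weight_sequence_quot_ge_1[OF ws, of j] weight_sequence_pos[OF ws]
    by (intro mult_mono) (auto intro: less_imp_le)
  also have "\<dots> = M (Suc j + l)" using weight_sequence_Suc[OF ws, of "j + l"] by simp
  finally show ?case .
qed (use ws in \<open>simp add: weight_sequence_def\<close>)

lemma fact_div_le_geometric:
  assumes pos: "\<And>k. M k > 0"
    and lim: "filterlim (\<lambda>k. (M k / fact k) powr (1 / real k)) at_top sequentially"
    and e: "\<epsilon> > 0"
  obtains D where "D \<ge> 0" "\<And>l. fact l / M l \<le> D * \<epsilon>^l"
proof -
  obtain N where N: "\<And>k. k \<ge> N \<Longrightarrow> (M k / fact k) powr (1 / real k) \<ge> 1 / \<epsilon>"
    using lim unfolding filterlim_at_top eventually_sequentially by blast
  have large: "fact k / M k \<le> \<epsilon>^k" if k: "k \<ge> Suc N" for k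
  proof -
    have "(1/\<epsilon>)^k \<le> ((M k / fact k) powr (1 / real k))^k"
      by (rule power_mono) (use N[of k] k e in auto)
    also have "\<dots> = (M k / fact k) powr (real k * (1 / real k))"
      by (rule powr_power) (use pos[of k] in simp)
    also have "\<dots> = M k / fact k"
      using pos[of k] k by simp
    finally show ?thesis using pos[of k] e by (simp add: power_one_over field_simps)
  qed
  define D where "D = max 1 (Max ((\<lambda>l. (fact l / M l) / \<epsilon>^l) ` {..N}))"
  have "fact l / M l \<le> D * \<epsilon>^l" for l
  proof (cases "l \<ge> Suc N")
    case True
    have "\<epsilon>^l \<le> D * \<epsilon>^l" using e by (simp add: D_def)
    then show ?thesis using large[OF True] by linarith
  next
    case False
    then have "(fact l / M l) / \<epsilon>^l \<le> D" unfolding D_def by (intro max.coboundedI2 Max_ge) auto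
    then show ?thesis using e pos[of l] by (simp add: field_simps)
  qed
  then show ?thesis using that[of D] by (simp add: D_def)
qed

lemma lah_mult_weight_le:
  assumes ws: "weight_sequence M" and j: "j \<le> k" and D: "D \<ge> 0" and \<epsilon>: "\<epsilon> > 0"
    and fact_le: "\<And>l. fact l / M l \<le> D * \<epsilon>^l"
  shows "lah k j * M j \<le> 6^k * (D * \<epsilon>^(k - j) * M k)"
proof -
  have M: "M i > 0" for i using weight_sequence_pos[OF ws] .
  have "fact k = fact j * fact (k - j) * real (k choose j)"
    using binomial_fact_lemma[OF j] by (metis of_nat_fact of_nat_mult)
  moreover have "real (k choose j) \<le> 2^k"
    using binomial_le_pow2[of k j] by (metis of_nat_le_iff of_nat_numeral of_nat_power)
  ultimately have binom: "fact k / fact j \<le> (2::real)^k * fact (k - j)" by (simp add: field_simps)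
  have "fact (k - j) * M j = (fact (k - j) / M (k - j)) * (M j * M (k - j))"
    using M[of "k - j"] by (simp add: field_simps)
  also have "\<dots> \<le> (D * \<epsilon>^(k - j)) * M k"
    using weight_sequence_mult_le[OF ws, of j "k - j"] j fact_le[of "k - j"] M D \<epsilon>
    by (intro mult_mono) (auto intro: less_imp_le)
  finally have fact_M: "fact (k - j) * M j \<le> D * \<epsilon>^(k - j) * M k" .
  have "lah k j * M j \<le> 3^k * (fact k / fact j) * M j"
    using lah_fact_le[of k j] M[of j] by (intro mult_right_mono) (auto simp: field_simps)
  also have "\<dots> \<le> 3^k * (2^k * fact (k - j)) * M j"
    using binom M[of j] by (intro mult_right_mono mult_left_mono) auto
  also have "\<dots> = 6^k * (fact (k - j) * M j)"
    by (simp add: power_mult_distrib[symmetric])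
  also have "\<dots> \<le> 6^k * (D * \<epsilon>^(k - j) * M k)"
    using fact_M by (intro mult_left_mono) auto
  finally show ?thesis .
qed

lemma lah_weight_term_le:
  fixes c D \<rho> A R \<epsilon> \<sigma> :: real
  assumes ws: "weight_sequence M" and j: "j \<le> k" and c: "c \<ge> 0" and D: "D \<ge> 0"
    and pos: "\<rho> > 0" "A > 0" "R > 0" "\<epsilon> > 0" and lam: "\<rho> * A \<le> \<sigma>" "\<epsilon> \<le> \<sigma>"
    and fact_le: "\<And>l. fact l / M l \<le> D * \<epsilon>^l"
  shows "(c * \<rho>^j * M j) * (A^j * R^k * lah k j) \<le> c * D * (6 * R * \<sigma>)^k * M k"
proof -
  have "(\<rho> * A)^j * \<epsilon>^(k - j) \<le> \<sigma>^j * \<sigma>^(k - j)"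
    using pos lam by (intro mult_mono power_mono) auto
  also have "\<dots> = \<sigma>^k" using j by (simp add: power_add[symmetric])
  finally have powers: "(\<rho> * A)^j * \<epsilon>^(k - j) \<le> \<sigma>^k" .
  have "(c * \<rho>^j * M j) * (A^j * R^k * lah k j) = c * R^k * (\<rho> * A)^j * (lah k j * M j)"
    by (simp add: power_mult_distrib algebra_simps)
  also have "\<dots> \<le> c * R^k * (\<rho> * A)^j * (6^k * (D * \<epsilon>^(k - j) * M k))"
    using lah_mult_weight_le[OF ws j D pos(4) fact_le] c pos by (intro mult_left_mono) auto
  also have "\<dots> = c * D * R^k * 6^k * M k * ((\<rho> * A)^j * \<epsilon>^(k - j))"
    by (simp add: algebra_simps)
  also have "\<dots> \<le> c * D * R^k * 6^k * M k * \<sigma>^k"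
    using powers c D pos weight_sequence_pos[OF ws, of k] by (intro mult_left_mono) auto
  also have "\<dots> = c * D * (6 * R * \<sigma>)^k * M k"
    by (simp add: power_mult_distrib algebra_simps)
  finally show ?thesis .
qed

lemma lah_weight_sum_le:
  fixes c D \<rho> A R \<epsilon> \<sigma> :: real
  assumes ws: "weight_sequence M" and c: "c \<ge> 0" and D: "D \<ge> 0"
    and pos: "\<rho> > 0" "A > 0" "R > 0" "\<epsilon> > 0" and lam: "\<rho> * A \<le> \<sigma>" "\<epsilon> \<le> \<sigma>"
    and fact_le: "\<And>l. fact l / M l \<le> D * \<epsilon>^l"
  shows "(\<Sum>j\<le>k. (c * \<rho>^j * M j) * (A^j * R^k * lah k j)) \<le> c * D * (12 * R * \<sigma>)^k * M k"
proof -
  have nonneg: "0 \<le> c * D * (6 * R * \<sigma>)^k * M k"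
    using c D pos lam weight_sequence_pos[OF ws, of k] by simp
  have "(\<Sum>j\<le>k. (c * \<rho>^j * M j) * (A^j * R^k * lah k j)) \<le> (\<Sum>j\<le>k. c * D * (6 * R * \<sigma>)^k * M k)"
    using lah_weight_term_le[OF ws _ c D pos lam fact_le] by (intro sum_mono) auto
  also have "\<dots> = real (Suc k) * (c * D * (6 * R * \<sigma>)^k * M k)" by simp
  also have "\<dots> \<le> 2^k * (c * D * (6 * R * \<sigma>)^k * M k)"
  proof (rule mult_right_mono[OF _ nonneg])
    have "Suc k \<le> 2^k" by (induction k) auto
    then show "real (Suc k) \<le> 2^k" by (metis of_nat_le_iff of_nat_numeral of_nat_power)
  qed
  also have "\<dots> = c * D * (12 * R * \<sigma>)^k * M k"
    by (simp add: power_mult_distrib[symmetric] mult_ac)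
  finally show ?thesis .
qed

subsection \<open>Termwise differentiation of power series\<close>

lemma sums_infsum_from_nat_into:
  fixes g :: "'a::countable \<Rightarrow> real"
  assumes "infinite (UNIV :: 'a set)" "g summable_on UNIV"
  shows "(\<lambda>n. g (from_nat_into UNIV n)) sums infsum g UNIV"
proof -
  have "bij_betw (from_nat_into UNIV) UNIV (UNIV :: 'a set)"
    by (rule bij_betw_from_nat_into) (use assms(1) in simp_all)
  moreover have "(g has_sum infsum g UNIV) UNIV" using assms(2) by simp
  ultimately have "((\<lambda>n. g (from_nat_into UNIV n)) has_sum infsum g UNIV) UNIV"
    using has_sum_reindex_bij_betw by blast
  then show ?thesis by (rule has_sum_imp_sums)
qed

lemma DERIV_infsum:
  fixes f f' :: "'a::countable \<Rightarrow> real \<Rightarrow> real"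
  assumes inf: "infinite (UNIV :: 'a set)" and \<delta>: "\<delta> > 0"
    and der: "\<And>\<alpha> x. \<bar>x\<bar> < \<delta> \<Longrightarrow> DERIV (f \<alpha>) x :> f' \<alpha> x"
    and bound: "\<And>\<alpha> x. \<bar>x\<bar> < \<delta> \<Longrightarrow> \<bar>f' \<alpha> x\<bar> \<le> B \<alpha>" and B: "B summable_on UNIV"
    and summable: "\<And>x. \<bar>x\<bar> < \<delta> \<Longrightarrow> (\<lambda>\<alpha>. f \<alpha> x) summable_on UNIV"
  shows "DERIV (\<lambda>x. infsum (\<lambda>\<alpha>. f \<alpha> x) UNIV) 0 :> infsum (\<lambda>\<alpha>. f' \<alpha> 0) UNIV"
proof -
  define e where "e = from_nat_into (UNIV :: 'a set)"
  note sums = sums_infsum_from_nat_into[OF inf, folded e_def]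
  define S where "S = cball (0::real) (\<delta>/2)"
  have S: "\<bar>x\<bar> < \<delta>" if "x \<in> S" for x using \<delta> that by (simp add: S_def)
  have "uniformly_convergent_on S (\<lambda>n x. \<Sum>i<n. f' (e i) x)"
    using bound[OF S] by (intro Weierstrass_m_test'[OF _ sums_summable[OF sums[OF B]]]) auto
  moreover have "convex S" "0 \<in> S" "0 \<in> interior S" using \<delta> by (auto simp: S_def)
  moreover have "summable (\<lambda>n. f (e n) 0)" using sums[OF summable[of 0]] \<delta> sums_summable by simp
  ultimately have "((\<lambda>x. \<Sum>n. f (e n) x) has_field_derivative (\<Sum>n. f' (e n) 0)) (at 0)"
    using der[OF S] by (intro has_field_derivative_series'(2)) (auto intro: has_field_derivative_at_within)
  moreover have "(\<lambda>\<alpha>. norm (f' \<alpha> 0)) summable_on UNIV"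
    by (rule summable_on_comparison_test[OF B]) (use bound[of 0] \<delta> in auto)
  then have "(\<Sum>n. f' (e n) 0) = infsum (\<lambda>\<alpha>. f' \<alpha> 0) UNIV"
    using sums_unique[OF sums[OF abs_summable_summable]] by simp
  moreover have "\<forall>\<^sub>F x in nhds 0. (\<Sum>n. f (e n) x) = infsum (\<lambda>\<alpha>. f \<alpha> x) UNIV"
  proof -
    have "\<forall>\<^sub>F x in nhds (0::real). x \<in> ball 0 \<delta>" using \<delta> by (intro eventually_nhds_in_open) auto
    then show ?thesis
      by eventually_elim (use sums_unique[OF sums[OF summable]] in simp)
  qed
  ultimately show ?thesis using DERIV_cong_ev[OF refl] by metis
qed

lemma continuous_on_infsum:
  fixes f :: "'a \<Rightarrow> 'b::topological_space \<Rightarrow> real"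
  assumes "\<And>\<alpha>. continuous_on Y (f \<alpha>)"
    and "\<And>\<alpha> y. y \<in> Y \<Longrightarrow> \<bar>f \<alpha> y\<bar> \<le> B \<alpha>" and "B summable_on UNIV"
  shows "continuous_on Y (\<lambda>y. infsum (\<lambda>\<alpha>. f \<alpha> y) UNIV)"
proof (rule uniform_limit_theorem)
  show "uniform_limit Y (\<lambda>X y. \<Sum>x\<in>X. f x y) (\<lambda>y. \<Sum>\<^sub>\<infinity>x\<in>UNIV. f x y) (finite_subsets_at_top UNIV)"
    by (rule Weierstrass_m_test_general[OF _ assms(3)]) (use assms(2) in auto)
  show "\<forall>\<^sub>F X in finite_subsets_at_top UNIV. continuous_on Y (\<lambda>y. \<Sum>x\<in>X. f x y)"
    by (intro always_eventually allI continuous_on_sum) (use assms(1) in auto)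
qed (simp add: finite_subsets_at_top_neq_bot)

definition half_powers :: "('n::finite \<Rightarrow> nat) \<Rightarrow> real" where
  "half_powers \<alpha> = (\<Prod>i\<in>UNIV. (1/2)^(\<alpha> i))"

lemma half_powers_nonneg: "half_powers \<alpha> \<ge> 0"
  unfolding half_powers_def by (intro prod_nonneg) auto

lemma sum_half_powers_le:
  fixes P :: "('n::finite \<Rightarrow> nat) set"
  assumes P: "finite P"
  shows "sum half_powers P \<le> 2^CARD('n)"
proof -
  define N where "N = Max ((\<lambda>(\<alpha>, i). \<alpha> i) ` (P \<times> (UNIV :: 'n set)))"
  have "P \<subseteq> PiE UNIV (\<lambda>_. {..N})"
    using P by (auto simp: PiE_def Pi_def N_def intro!: Max_ge)
  then have "sum half_powers P \<le> sum half_powers (PiE (UNIV :: 'n set) (\<lambda>_. {..N}))"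
    by (intro sum_mono2) (auto simp: finite_PiE half_powers_nonneg)
  also have "\<dots> = (\<Prod>i\<in>(UNIV :: 'n set). \<Sum>a\<le>N. (1/2::real)^a)"
    unfolding half_powers_def by (subst prod_sum_PiE) auto
  also have "\<dots> \<le> (\<Prod>i\<in>(UNIV :: 'n set). 2)"
    using sum_gp[of "1/2::real" 0 N] power_le_one[of "1/2::real" N]
    by (intro prod_mono) (auto simp: atMost_atLeast0 intro: sum_nonneg)
  finally show ?thesis by simp
qed

lemma half_powers_summable: "(half_powers :: ('n::finite \<Rightarrow> nat) \<Rightarrow> real) summable_on UNIV"
  using sum_half_powers_le[where 'n='n] half_powers_nonneg
  by (intro nonneg_bdd_above_summable_on) (auto simp: bdd_above_def)

lemma infsum_half_powers_le: "infsum (half_powers :: ('n::finite \<Rightarrow> nat) \<Rightarrow> real) UNIV \<le> 2^CARD('n)"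
  using sum_half_powers_le[where 'n='n] by (intro infsum_le_finite_sums[OF half_powers_summable]) auto

definition falling_fact :: "nat \<Rightarrow> nat \<Rightarrow> real" where
  "falling_fact a b = (if b \<le> a then fact a / fact (a - b) else 0)"

lemma falling_fact_0 [simp]: "falling_fact a 0 = 1"
  by (simp add: falling_fact_def)

lemma falling_fact_nonneg: "falling_fact a b \<ge> 0"
  by (simp add: falling_fact_def)

lemma falling_fact_Suc: "falling_fact a b * real (a - b) = falling_fact a (Suc b)"
proof (cases "Suc b \<le> a")
  case True
  then have "fact (a - b) = real (a - b) * fact (a - Suc b)"
    by (metis Suc_diff_Suc Suc_le_lessD fact_Suc of_nat_fact of_nat_mult)
  moreover have "real (a - b) \<noteq> 0" using True by simp
  ultimately show ?thesis using True by (simp add: falling_fact_def)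
qed (auto simp: falling_fact_def)

lemma falling_fact_scaled_le:
  fixes s :: real
  assumes s: "s > 0"
  shows "falling_fact a b * (s/4)^(a - b) / s^a \<le> fact b * (4/s)^b * (1/2)^a"
proof (cases "b \<le> a")
  case True
  have binom: "falling_fact a b = real (a choose b) * fact b"
    using binomial_fact_lemma[OF True] True
    by (simp add: falling_fact_def field_simps) (metis of_nat_fact of_nat_mult mult.commute)
  have powers: "(s/4)^(a - b) / s^a = 4^b * (1/4)^a / s^b"
    using s True by (simp add: power_divide field_simps flip: power_add)
  have "falling_fact a b * (s/4)^(a - b) / s^a = real (a choose b) * fact b * ((s/4)^(a - b) / s^a)"
    by (simp add: binom)
  also have "\<dots> = real (a choose b) * fact b * (4^b * (1/4)^a / s^b)"
    by (simp only: powers)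
  also have "\<dots> \<le> 2^a * fact b * (4^b * (1/4)^a / s^b)"
    using binomial_le_pow2[of a b] s
    by (intro mult_right_mono) (auto simp flip: of_nat_power intro: of_nat_mono[of _ "2^a", simplified])
  also have "\<dots> = fact b * (4/s)^b * ((2::real)^a * (1/4)^a)"
    by (simp add: power_divide field_simps)
  also have "(2::real)^a * (1/4)^a = (1/2)^a"
    by (simp add: power_mult_distrib[symmetric])
  finally show ?thesis .
qed (use s in \<open>simp add: falling_fact_def\<close>)

lemma fact_mult_fact_le: "fact m * fact n \<le> (fact (m + n) :: real)"
proof -
  have "fact m * fact n * real ((m + n) choose m) = fact (m + n)"
    using binomial_fact_lemma[of m "m + n"] by (metis add_diff_cancel_left' le_add1 of_nat_fact of_nat_mult)
  moreover have "real ((m + n) choose m) \<ge> 1" by (simp add: Suc_leI)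
  ultimately show ?thesis
    using mult_left_mono[of 1 "real ((m + n) choose m)" "fact m * fact n :: real"] by simp
qed

lemma prod_fact_le_fact_sum: "finite A \<Longrightarrow> (\<Prod>i\<in>A. fact (\<beta> i)) \<le> (fact (\<Sum>i\<in>A. \<beta> i) :: real)"
proof (induction A rule: finite_induct)
  case (insert x A)
  then have "(\<Prod>i\<in>insert x A. fact (\<beta> i)) \<le> fact (\<beta> x) * (fact (\<Sum>i\<in>A. \<beta> i) :: real)"
    by (auto intro: mult_left_mono)
  also have "\<dots> \<le> fact (\<beta> x + (\<Sum>i\<in>A. \<beta> i))" by (rule fact_mult_fact_le)
  finally show ?case using insert by simp
qed simp

lemma infinite_multi_indices: "infinite (UNIV :: ('n \<Rightarrow> nat) set)"
  using finite_fun_UNIVD2 infinite_UNIV_nat by blast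

definition monomial_deriv :: "real^'n::finite \<Rightarrow> ('n \<Rightarrow> nat) \<Rightarrow> ('n \<Rightarrow> nat) \<Rightarrow> real^'n \<Rightarrow> real" where
  "monomial_deriv x0 \<beta> \<alpha> y = (\<Prod>i\<in>UNIV. falling_fact (\<alpha> i) (\<beta> i) * (y$i - x0$i)^(\<alpha> i - \<beta> i))"

definition series_deriv ::
    "(('n::finite \<Rightarrow> nat) \<Rightarrow> real) \<Rightarrow> real^'n \<Rightarrow> ('n \<Rightarrow> nat) \<Rightarrow> real^'n \<Rightarrow> real" where
  "series_deriv c x0 \<beta> y = infsum (\<lambda>\<alpha>. c \<alpha> * monomial_deriv x0 \<beta> \<alpha> y) UNIV"

definition cube :: "real^'n::finite \<Rightarrow> real \<Rightarrow> (real^'n) set" where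
  "cube x0 t = {y. \<forall>i. \<bar>y$i - x0$i\<bar> < t}"

lemma open_cube:
  fixes x0 :: "real^'n::finite"
  shows "open (cube x0 t)"
proof -
  have "cube x0 t = (\<Inter>i\<in>UNIV. {y. \<bar>y$i - x0$i\<bar> < t})" by (auto simp: cube_def)
  moreover have "open {y::real^'n. \<bar>y$i - x0$i\<bar> < t}" for i
    by (intro open_Collect_less continuous_intros)
  ultimately show ?thesis by (auto intro: open_INT)
qed

lemma centre_in_cube: "t > 0 \<Longrightarrow> x0 \<in> cube x0 t"
  by (simp add: cube_def)

definition deriv_growth :: "('n::finite \<Rightarrow> nat) \<Rightarrow> real \<Rightarrow> real" where
  "deriv_growth \<beta> s = (\<Prod>i\<in>UNIV. fact (\<beta> i) * (4/s)^(\<beta> i))"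

lemma deriv_growth_nonneg: "s > 0 \<Longrightarrow> deriv_growth \<beta> s \<ge> 0"
  unfolding deriv_growth_def by (intro prod_nonneg) auto

lemma deriv_growth_le: "s > 0 \<Longrightarrow> deriv_growth \<beta> s \<le> fact (mlen \<beta>) * (4/s)^(mlen \<beta>)"
  unfolding deriv_growth_def mlen_def prod.distrib power_sum
  by (intro mult_right_mono prod_fact_le_fact_sum) (auto intro: prod_nonneg)

lemma monomial_deriv_term_bound:
  fixes c :: "('n::finite \<Rightarrow> nat) \<Rightarrow> real"
  assumes s: "s > 0" and c: "\<And>\<alpha>. \<bar>c \<alpha>\<bar> * (\<Prod>i\<in>UNIV. s^(\<alpha> i)) \<le> K"
    and y: "\<And>i. \<bar>y$i - x0$i\<bar> \<le> s/4"
  shows "\<bar>c \<alpha> * monomial_deriv x0 \<beta> \<alpha> y\<bar> \<le> K * deriv_growth \<beta> s * half_powers \<alpha>"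
proof -
  have "\<bar>monomial_deriv x0 \<beta> \<alpha> y\<bar> \<le> (\<Prod>i\<in>UNIV. falling_fact (\<alpha> i) (\<beta> i) * (s/4)^(\<alpha> i - \<beta> i))"
    unfolding monomial_deriv_def abs_prod
    by (intro prod_mono conjI)
      (use y falling_fact_nonneg in \<open>auto simp: abs_mult power_abs intro!: mult_left_mono power_mono\<close>)
  also have "\<dots> = (\<Prod>i\<in>UNIV. s^(\<alpha> i)) *
      (\<Prod>i\<in>UNIV. falling_fact (\<alpha> i) (\<beta> i) * (s/4)^(\<alpha> i - \<beta> i) / s^(\<alpha> i))"
    using s by (simp add: prod.distrib[symmetric])
  also have "\<dots> \<le> (\<Prod>i\<in>UNIV. s^(\<alpha> i)) * (\<Prod>i\<in>UNIV. fact (\<beta> i) * (4/s)^(\<beta> i) * (1/2)^(\<alpha> i))"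
    using s by (intro mult_left_mono prod_mono conjI falling_fact_scaled_le)
      (auto intro!: divide_nonneg_pos mult_nonneg_nonneg falling_fact_nonneg prod_nonneg)
  finally have "\<bar>c \<alpha>\<bar> * \<bar>monomial_deriv x0 \<beta> \<alpha> y\<bar>
      \<le> (\<bar>c \<alpha>\<bar> * (\<Prod>i\<in>UNIV. s^(\<alpha> i))) * (\<Prod>i\<in>UNIV. fact (\<beta> i) * (4/s)^(\<beta> i) * (1/2)^(\<alpha> i))"
    by (simp add: mult_left_mono mult.assoc)
  also have "\<dots> \<le> K * (\<Prod>i\<in>UNIV. fact (\<beta> i) * (4/s)^(\<beta> i) * (1/2)^(\<alpha> i))"
    using s by (intro mult_right_mono c prod_nonneg) auto
  finally show ?thesis
    by (simp add: abs_mult deriv_growth_def half_powers_def prod.distrib mult.assoc)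
qed

lemma monomial_deriv_DERIV:
  fixes x0 y :: "real^'n::finite"
  shows "DERIV (\<lambda>\<tau>. monomial_deriv x0 \<beta> \<alpha> (y + \<tau> *\<^sub>R axis d 1)) \<tau>0 :>
    monomial_deriv x0 (\<beta>(d := Suc (\<beta> d))) \<alpha> (y + \<tau>0 *\<^sub>R axis d 1)"
proof -
  define R where "R = (\<Prod>i\<in>UNIV - {d}. falling_fact (\<alpha> i) (\<beta> i) * (y$i - x0$i)^(\<alpha> i - \<beta> i))"
  define a where "a = \<alpha> d"
  define b where "b = \<beta> d"
  define w where "w = y$d - x0$d"
  have split: "monomial_deriv x0 \<gamma> \<alpha> (y + \<tau> *\<^sub>R axis d 1) =
      falling_fact a (\<gamma> d) * (\<tau> + w)^(a - \<gamma> d) *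
      (\<Prod>i\<in>UNIV - {d}. falling_fact (\<alpha> i) (\<gamma> i) * (y$i - x0$i)^(\<alpha> i - \<gamma> i))" for \<gamma> \<tau>
  proof -
    have "(\<Prod>i\<in>UNIV - {d}. falling_fact (\<alpha> i) (\<gamma> i) * ((y + \<tau> *\<^sub>R axis d 1)$i - x0$i)^(\<alpha> i - \<gamma> i))
       = (\<Prod>i\<in>UNIV - {d}. falling_fact (\<alpha> i) (\<gamma> i) * (y$i - x0$i)^(\<alpha> i - \<gamma> i))"
      by (rule prod.cong) (auto simp: axis_def)
    then show ?thesis
      unfolding monomial_deriv_def prod.remove[OF finite UNIV_I, of _ d]
      by (simp add: a_def w_def algebra_simps)
  qed
  have "DERIV (\<lambda>\<tau>. falling_fact a b * (\<tau> + w)^(a - b) * R) \<tau>0 :>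
      falling_fact a b * (real (a - b) * (\<tau>0 + w)^(a - b - 1)) * R"
    by (auto intro!: derivative_eq_intros)
  also have "falling_fact a b * (real (a - b) * (\<tau>0 + w)^(a - b - 1)) * R
      = falling_fact a (Suc b) * (\<tau>0 + w)^(a - Suc b) * R"
    using falling_fact_Suc[of a b] by (simp add: algebra_simps)
  also have "(\<Prod>i\<in>UNIV - {d}. falling_fact (\<alpha> i) ((\<beta>(d := Suc (\<beta> d))) i) *
      (y$i - x0$i)^(\<alpha> i - (\<beta>(d := Suc (\<beta> d))) i)) = R"
    unfolding R_def by (rule prod.cong) auto
  then have "falling_fact a (Suc b) * (\<tau>0 + w)^(a - Suc b) * R
      = monomial_deriv x0 (\<beta>(d := Suc (\<beta> d))) \<alpha> (y + \<tau>0 *\<^sub>R axis d 1)"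
    using split[of "\<beta>(d := Suc (\<beta> d))"] by (simp add: b_def)
  finally show ?thesis
    using split[of \<beta>] by (simp add: R_def b_def)
qed

context
  fixes c :: "('n::finite \<Rightarrow> nat) \<Rightarrow> real" and s K :: real
  assumes s: "s > 0" and coeff: "\<And>\<alpha>. \<bar>c \<alpha>\<bar> * (\<Prod>i\<in>UNIV. s^(\<alpha> i)) \<le> K"
begin

lemma series_deriv_summable:
  assumes "\<And>i. \<bar>y$i - x0$i\<bar> \<le> s/4"
  shows "(\<lambda>\<alpha>. norm (c \<alpha> * monomial_deriv x0 \<beta> \<alpha> y)) summable_on UNIV"
  using monomial_deriv_term_bound[OF s coeff assms]
  by (intro summable_on_comparison_test[OF summable_on_cmult_right[OF half_powers_summable]]) auto

lemma abs_series_deriv_le: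
  assumes "\<And>i. \<bar>y$i - x0$i\<bar> \<le> s/4"
  shows "\<bar>series_deriv c x0 \<beta> y\<bar> \<le> K * deriv_growth \<beta> s * 2^CARD('n)"
proof -
  have K: "K \<ge> 0"
    using coeff[of undefined] s by (smt (verit) abs_ge_zero mult_nonneg_nonneg prod_nonneg zero_le_power)
  note summable = series_deriv_summable[OF assms]
  have "\<bar>series_deriv c x0 \<beta> y\<bar> \<le> infsum (\<lambda>\<alpha>. norm (c \<alpha> * monomial_deriv x0 \<beta> \<alpha> y)) UNIV"
    unfolding series_deriv_def using norm_infsum_bound[OF summable] by simp
  also have "\<dots> \<le> infsum (\<lambda>\<alpha>::'n \<Rightarrow> nat. K * deriv_growth \<beta> s * half_powers \<alpha>) UNIV"
  proof (rule infsum_mono[OF summable])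
    show "(\<lambda>\<alpha>::'n \<Rightarrow> nat. K * deriv_growth \<beta> s * half_powers \<alpha>) summable_on UNIV"
      by (rule summable_on_cmult_right[OF half_powers_summable])
  qed (use monomial_deriv_term_bound[OF s coeff assms] in auto)
  also have "\<dots> = K * deriv_growth \<beta> s * infsum (half_powers :: ('n \<Rightarrow> nat) \<Rightarrow> real) UNIV"
    by (rule infsum_cmult_right'[where f=half_powers])
  also have "\<dots> \<le> K * deriv_growth \<beta> s * 2^CARD('n)"
    using infsum_half_powers_le[where 'n='n] K deriv_growth_nonneg[OF s, of \<beta>]
    by (intro mult_left_mono mult_nonneg_nonneg) auto
  finally show ?thesis .
qed

lemma series_deriv_DERIV:
  assumes y: "y \<in> cube x0 (s/4)"
  shows "DERIV (\<lambda>\<tau>. series_deriv c x0 \<beta> (y + \<tau> *\<^sub>R axis d 1)) 0 :>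
    series_deriv c x0 (\<beta>(d := Suc (\<beta> d))) y"
proof -
  define \<delta> where "\<delta> = s/4 - \<bar>y$d - x0$d\<bar>"
  have \<delta>: "\<delta> > 0" using y by (simp add: cube_def \<delta>_def)
  have near: "\<bar>(y + \<tau> *\<^sub>R axis d 1)$i - x0$i\<bar> \<le> s/4" if "\<bar>\<tau>\<bar> < \<delta>" for \<tau> i
  proof (cases "i = d")
    case True
    have "\<bar>y$d + \<tau> - x0$d\<bar> \<le> \<bar>y$d - x0$d\<bar> + \<bar>\<tau>\<bar>" by linarith
    then show ?thesis using True that by (simp add: axis_def \<delta>_def)
  qed (use y in \<open>auto simp: axis_def cube_def less_imp_le\<close>)
  have "DERIV (\<lambda>\<tau>. infsum (\<lambda>\<alpha>. c \<alpha> * monomial_deriv x0 \<beta> \<alpha> (y + \<tau> *\<^sub>R axis d 1)) UNIV) 0 :>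
      infsum (\<lambda>\<alpha>. c \<alpha> * monomial_deriv x0 (\<beta>(d := Suc (\<beta> d))) \<alpha> (y + 0 *\<^sub>R axis d 1)) UNIV"
  proof (rule DERIV_infsum[OF infinite_multi_indices \<delta>])
    show "DERIV (\<lambda>\<tau>. c \<alpha> * monomial_deriv x0 \<beta> \<alpha> (y + \<tau> *\<^sub>R axis d 1)) x :>
        c \<alpha> * monomial_deriv x0 (\<beta>(d := Suc (\<beta> d))) \<alpha> (y + x *\<^sub>R axis d 1)" for \<alpha> x
      by (intro DERIV_cmult monomial_deriv_DERIV)
    show "\<bar>c \<alpha> * monomial_deriv x0 (\<beta>(d := Suc (\<beta> d))) \<alpha> (y + x *\<^sub>R axis d 1)\<bar>
        \<le> K * deriv_growth (\<beta>(d := Suc (\<beta> d))) s * half_powers \<alpha>" if "\<bar>x\<bar> < \<delta>" for \<alpha> x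
      by (rule monomial_deriv_term_bound[OF s coeff near[OF that]])
    show "(\<lambda>\<alpha>::'n \<Rightarrow> nat. K * deriv_growth (\<beta>(d := Suc (\<beta> d))) s * half_powers \<alpha>) summable_on UNIV"
      by (rule summable_on_cmult_right[OF half_powers_summable])
    show "(\<lambda>\<alpha>. c \<alpha> * monomial_deriv x0 \<beta> \<alpha> (y + x *\<^sub>R axis d 1)) summable_on UNIV" if "\<bar>x\<bar> < \<delta>" for x
      using series_deriv_summable[OF near[OF that]] by (rule abs_summable_summable)
  qed
  then show ?thesis by (simp add: series_deriv_def)
qed

lemma continuous_on_series_deriv: "continuous_on (cube x0 (s/4)) (series_deriv c x0 \<beta>)"
  unfolding series_deriv_def[abs_def]
proof (rule continuous_on_infsum)
  show "continuous_on (cube x0 (s/4)) (\<lambda>y. c \<alpha> * monomial_deriv x0 \<beta> \<alpha> y)" for \<alpha>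
    unfolding monomial_deriv_def by (intro continuous_intros)
  show "\<bar>c \<alpha> * monomial_deriv x0 \<beta> \<alpha> y\<bar> \<le> K * deriv_growth \<beta> s * half_powers \<alpha>"
    if "y \<in> cube x0 (s/4)" for \<alpha> y
    using that by (intro monomial_deriv_term_bound[OF s coeff]) (auto simp: cube_def less_imp_le)
qed (rule summable_on_cmult_right[OF half_powers_summable])

end

subsection \<open>Cauchy estimates for real analytic functions\<close>

lemma dist_le_card_mult:
  fixes y x0 :: "real^'n::finite" and t :: real
  assumes "\<And>i. \<bar>y$i - x0$i\<bar> \<le> t"
  shows "dist y x0 \<le> CARD('n) * t"
proof -
  have "dist y x0 \<le> (\<Sum>i\<in>UNIV. \<bar>(y - x0)$i\<bar>)" unfolding dist_norm by (rule norm_le_l1_cart)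
  also have "\<dots> \<le> (\<Sum>i\<in>(UNIV::'n set). t)" using assms by (intro sum_mono) simp
  finally show ?thesis by simp
qed

lemma power_series_coeff_bound:
  fixes c :: "('n::finite \<Rightarrow> nat) \<Rightarrow> real" and x0 :: "real^'n"
  assumes r: "r > 0"
    and has_sum: "\<And>x. x \<in> ball x0 r \<Longrightarrow> ((\<lambda>\<alpha>. c \<alpha> * (\<Prod>i\<in>UNIV. (x$i - x0$i)^(\<alpha> i))) has_sum g x) UNIV"
  obtains s K where "s > 0" "\<And>\<alpha>. \<bar>c \<alpha>\<bar> * (\<Prod>i\<in>UNIV. s^(\<alpha> i)) \<le> K" "cube x0 s \<subseteq> ball x0 r"
proof -
  define s where "s = r / (2 * CARD('n))"
  have s: "s > 0" "CARD('n) * s < r" using r by (simp_all add: s_def)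
  have "dist (x0 + (\<chi> i. s)) x0 \<le> CARD('n) * s"
    using s by (intro dist_le_card_mult) simp
  then have "x0 + (\<chi> i. s) \<in> ball x0 r" using s by (simp add: dist_commute)
  from has_sum[OF this] have "(\<lambda>\<alpha>. c \<alpha> * (\<Prod>i\<in>UNIV. s^(\<alpha> i))) summable_on UNIV"
    by (simp add: has_sum_imp_summable)
  then have summable: "(\<lambda>\<alpha>. norm (c \<alpha> * (\<Prod>i\<in>UNIV. s^(\<alpha> i)))) summable_on UNIV"
    by (rule summable_on_iff_abs_summable_on_real[THEN iffD1])
  have "\<bar>c \<alpha>\<bar> * (\<Prod>i\<in>UNIV. s^(\<alpha> i)) \<le> infsum (\<lambda>\<alpha>. norm (c \<alpha> * (\<Prod>i\<in>UNIV. s^(\<alpha> i)))) UNIV" for \<alpha>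
  proof -
    have "sum (\<lambda>\<alpha>. norm (c \<alpha> * (\<Prod>i\<in>UNIV. s^(\<alpha> i)))) {\<alpha>}
        \<le> infsum (\<lambda>\<alpha>. norm (c \<alpha> * (\<Prod>i\<in>UNIV. s^(\<alpha> i)))) UNIV"
      by (rule finite_sum_le_infsum[OF summable]) auto
    moreover have "(\<Prod>i\<in>UNIV. s^(\<alpha> i)) \<ge> 0" using s by (intro prod_nonneg) auto
    ultimately show ?thesis by (simp add: abs_mult)
  qed
  moreover have "cube x0 s \<subseteq> ball x0 r"
  proof
    fix y assume "y \<in> cube x0 s"
    then have "dist y x0 \<le> CARD('n) * s"
      by (intro dist_le_card_mult) (auto simp: cube_def less_imp_le)
    then show "y \<in> ball x0 r" using s by (simp add: dist_commute)
  qed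
  ultimately show ?thesis using that s by blast
qed

lemma count_list_Cons_eq_upd: "count_list (d # fs) = (count_list fs)(d := Suc (count_list fs d))"
  by (auto simp: fun_eq_iff)

lemma real_analytic_on_local_series:
  assumes "real_analytic_on \<Omega> g" "x0 \<in> \<Omega>"
  obtains s c K where "s > 0" "\<And>\<alpha>. \<bar>c \<alpha>\<bar> * (\<Prod>i\<in>UNIV. s^(\<alpha> i)) \<le> K"
    "\<And>fs y. y \<in> cube x0 (s/4) \<Longrightarrow> dlist fs g y = series_deriv c x0 (count_list fs) y"
proof -
  obtain r c where r: "r > 0"
    and has_sum: "\<And>x. x \<in> ball x0 r \<Longrightarrow> ((\<lambda>\<alpha>. c \<alpha> * (\<Prod>i\<in>UNIV. (x$i - x0$i) ^ \<alpha> i)) has_sum g x) UNIV"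
    using assms unfolding real_analytic_on_def by blast
  obtain s K where s: "s > 0" and coeff: "\<And>\<alpha>. \<bar>c \<alpha>\<bar> * (\<Prod>i\<in>UNIV. s^(\<alpha> i)) \<le> K"
    and cube: "cube x0 s \<subseteq> ball x0 r"
    using power_series_coeff_bound[OF r has_sum] by blast
  have series: "dlist fs g y = series_deriv c x0 (count_list fs) y" if "y \<in> cube x0 (s/4)" for fs y
    using that
  proof (induction fs arbitrary: y)
    case Nil
    have "\<bar>y$i - x0$i\<bar> < s" for i
    proof -
      have "\<bar>y$i - x0$i\<bar> < s/4" using Nil by (simp add: cube_def)
      then show ?thesis using s by linarith
    qed
    then have "y \<in> cube x0 s" by (simp add: cube_def)
    with cube have "y \<in> ball x0 r" by blast
    from has_sum[OF this] show ?case by (simp add: series_deriv_def monomial_deriv_def infsumI)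
  next
    case (Cons d fs)
    have "dlist (d # fs) g y = pd d (series_deriv c x0 (count_list fs)) y"
      by (simp, rule pd_cong_open[OF open_cube Cons.prems]) (use Cons.IH in auto)
    also have "\<dots> = series_deriv c x0 (count_list (d # fs)) y"
      unfolding count_list_Cons_eq_upd by (intro pd_eqI series_deriv_DERIV[OF s coeff Cons.prems])
    finally show ?case .
  qed
  show ?thesis by (rule that[OF s coeff series])
qed

lemma real_analytic_on_dlist_local:
  assumes "real_analytic_on \<Omega> g" "x0 \<in> \<Omega>"
  shows "isCont (dlist ds g) x0" "(\<lambda>\<tau>. dlist ds g (x0 + \<tau> *\<^sub>R axis i 1)) differentiable (at 0)"
proof -
  obtain c s K where s: "s > 0" and coeff: "\<And>\<alpha>. \<bar>c \<alpha>\<bar> * (\<Prod>i\<in>UNIV. s^(\<alpha> i)) \<le> K"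
    and series: "\<And>fs y. y \<in> cube x0 (s/4) \<Longrightarrow> dlist fs g y = series_deriv c x0 (count_list fs) y"
      using real_analytic_on_local_series[OF assms] by metis
  have x0: "x0 \<in> cube x0 (s/4)" using s by (simp add: centre_in_cube)
  have "continuous_on (cube x0 (s/4)) (dlist ds g)"
    using continuous_on_series_deriv[OF s coeff] by (rule continuous_on_eq) (simp add: series)
  then show "isCont (dlist ds g) x0"
    using continuous_on_eq_continuous_at[OF open_cube] x0 by blast
  have "DERIV (\<lambda>\<tau>. dlist ds g (x0 + \<tau> *\<^sub>R axis i 1)) 0 :>
      series_deriv c x0 ((count_list ds)(i := Suc (count_list ds i))) x0"
    by (rule DERIV_line_cong_open[OF open_cube x0 series series_deriv_DERIV[OF s coeff x0]])
  then show "(\<lambda>\<tau>. dlist ds g (x0 + \<tau> *\<^sub>R axis i 1)) differentiable (at 0)"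
    using real_differentiable_def by blast
qed

theorem real_analytic_on_smooth: "real_analytic_on \<Omega> g \<Longrightarrow> smooth_on \<Omega> g"
  unfolding smooth_on_def
  by (auto intro!: continuous_at_imp_continuous_on real_analytic_on_dlist_local)

lemma real_analytic_on_local_cauchy_bound:
  fixes g :: "real^'n::finite \<Rightarrow> real"
  assumes "real_analytic_on \<Omega> g" "x0 \<in> \<Omega>"
  shows "\<exists>N C R. open N \<and> x0 \<in> N \<and> C \<ge> 0 \<and> R \<ge> 1 \<and>
    (\<forall>fs. \<forall>y\<in>N. \<bar>dlist fs g y\<bar> \<le> C * R^(length fs) * fact (length fs))"
proof -
  obtain c s K where s: "s > 0" and coeff: "\<And>\<alpha>. \<bar>c \<alpha>\<bar> * (\<Prod>i\<in>UNIV. s^(\<alpha> i)) \<le> K"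
    and series: "\<And>fs y. y \<in> cube x0 (s/4) \<Longrightarrow> dlist fs g y = series_deriv c x0 (count_list fs) y"
      using real_analytic_on_local_series[OF assms] by metis
  have K: "K \<ge> 0"
    using coeff[of undefined] s by (smt (verit) abs_ge_zero mult_nonneg_nonneg prod_nonneg zero_le_power)
  have "\<bar>dlist fs g y\<bar> \<le> (K * 2^CARD('n)) * (max (4/s) 1)^(length fs) * fact (length fs)"
    if y: "y \<in> cube x0 (s/4)" for fs y
  proof -
    have "\<bar>dlist fs g y\<bar> \<le> K * deriv_growth (count_list fs) s * 2^CARD('n)"
      using series[OF y] abs_series_deriv_le[OF s coeff] y by (simp add: cube_def less_imp_le)
    also have "\<dots> \<le> K * (fact (length fs) * (max (4/s) 1)^(length fs)) * 2^CARD('n)"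
    proof -
      have "deriv_growth (count_list fs) s \<le> fact (length fs) * (4/s)^(length fs)"
        using deriv_growth_le[OF s, of "count_list fs"] sum_count_set[of fs UNIV] by (simp add: mlen_def)
      also have "\<dots> \<le> fact (length fs) * (max (4/s) 1)^(length fs)"
        using s by (intro mult_left_mono power_mono) auto
      finally show ?thesis using K by (intro mult_right_mono mult_left_mono) auto
    qed
    finally show ?thesis by (simp add: algebra_simps)
  qed
  then show ?thesis
    using K s open_cube centre_in_cube[of "s/4" x0]
    by (intro exI[of _ "cube x0 (s/4)"] exI[of _ "K * 2^CARD('n)"] exI[of _ "max (4/s) 1"]) auto
qed

lemma compact_factorial_bound:
  fixes h :: "'b \<Rightarrow> 'a::topological_space \<Rightarrow> real" and len :: "'b \<Rightarrow> nat"
  assumes K: "compact K"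
    and local: "\<And>x. x \<in> K \<Longrightarrow> \<exists>N C R. open N \<and> x \<in> N \<and> C \<ge> 0 \<and> R \<ge> 1 \<and>
       (\<forall>b. \<forall>y\<in>N. \<bar>h b y\<bar> \<le> C * R^(len b) * fact (len b))"
  obtains C R where "C \<ge> 0" "R \<ge> 1" "\<And>b y. y \<in> K \<Longrightarrow> \<bar>h b y\<bar> \<le> C * R^(len b) * fact (len b)"
proof -
  from local obtain N C R where NCR: "\<And>x. x \<in> K \<Longrightarrow> open (N x) \<and> x \<in> N x \<and> C x \<ge> 0 \<and> R x \<ge> 1 \<and>
       (\<forall>b. \<forall>y\<in>N x. \<bar>h b y\<bar> \<le> C x * R x^(len b) * fact (len b))"
    by metis
  obtain X where X: "X \<subseteq> K" "finite X" "K \<subseteq> (\<Union>x\<in>X. N x)"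
    by (rule compactE_image[OF K, of K N]) (use NCR in auto)
  define Cm where "Cm = Max (insert 0 (C ` X))"
  define Rm where "Rm = Max (insert 1 (R ` X))"
  have Cm: "Cm \<ge> 0" "\<And>x. x \<in> X \<Longrightarrow> C x \<le> Cm" using X(2) by (auto simp: Cm_def)
  have Rm: "Rm \<ge> 1" "\<And>x. x \<in> X \<Longrightarrow> R x \<le> Rm" using X(2) by (auto simp: Rm_def)
  have "\<bar>h b y\<bar> \<le> Cm * Rm^(len b) * fact (len b)" if y: "y \<in> K" for b y
  proof -
    obtain x where x: "x \<in> X" "y \<in> N x" using X(3) y by auto
    then have "x \<in> K" using X by auto
    then have "\<bar>h b y\<bar> \<le> C x * R x^(len b) * fact (len b)" using NCR x by blast
    also have "\<dots> \<le> Cm * Rm^(len b) * fact (len b)"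
      using NCR[OF \<open>x \<in> K\<close>] Cm Rm x by (intro mult_right_mono mult_mono power_mono) auto
    finally show ?thesis .
  qed
  with Cm Rm that show ?thesis by blast
qed

theorem real_analytic_on_cauchy_bound:
  assumes "real_analytic_on \<Omega> g" "compact K" "K \<subseteq> \<Omega>"
  obtains C R where "C \<ge> 0" "R \<ge> 1"
    "\<And>fs y. y \<in> K \<Longrightarrow> \<bar>dlist fs g y\<bar> \<le> C * R^(length fs) * fact (length fs)"
  using compact_factorial_bound[OF assms(2), of "\<lambda>fs. dlist fs g" length]
    real_analytic_on_local_cauchy_bound[OF assms(1)] assms(3) that
  by blast

lemma real_analytic_map_smooth:
  "real_analytic_map \<Omega> F \<Longrightarrow> smooth_on \<Omega> (\<lambda>y. F y $ j)"
  unfolding real_analytic_map_def by (blast intro: real_analytic_on_smooth)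

lemma real_analytic_map_cauchy_bound:
  fixes F :: "real^'n::finite \<Rightarrow> real^'m::finite"
  assumes "real_analytic_map \<Omega> F" "compact K" "K \<subseteq> \<Omega>"
  obtains C R where "C > 0" "R > 0"
    "\<And>fs j y. y \<in> K \<Longrightarrow> \<bar>dlist fs (\<lambda>y. F y $ j) y\<bar> \<le> cauchy_bound C R (length fs)"
proof -
  have "\<exists>C R. C \<ge> 0 \<and> R \<ge> 1 \<and> (\<forall>fs. \<forall>y\<in>K. \<bar>dlist fs (\<lambda>y. F y $ j) y\<bar> \<le> C * R^(length fs) * fact (length fs))"
    for j
    using assms real_analytic_on_cauchy_bound[of \<Omega> "\<lambda>y. F y $ j" K]
    unfolding real_analytic_map_def by metis
  then obtain C R where CR: "\<And>j. C j \<ge> 0" "\<And>j. R j \<ge> 1"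
    "\<And>j fs y. y \<in> K \<Longrightarrow> \<bar>dlist fs (\<lambda>y. F y $ j) y\<bar> \<le> C j * R j^(length fs) * fact (length fs)"
    by metis
  define Cm where "Cm = 1 + (\<Sum>j\<in>UNIV. C j)"
  define Rm where "Rm = 1 + (\<Sum>j\<in>UNIV. R j)"
  have "C j \<le> (\<Sum>j\<in>UNIV. C j)" "R j \<le> (\<Sum>j\<in>UNIV. R j)" for j
    using CR(1,2) by (auto intro!: member_le_sum intro: order_trans[OF zero_le_one])
  then have Cm: "C j \<le> Cm" and Rm: "R j \<le> Rm" for j
    unfolding Cm_def Rm_def by (smt (verit))+
  have "\<bar>dlist fs (\<lambda>y. F y $ j) y\<bar> \<le> cauchy_bound Cm Rm (length fs)" if "y \<in> K" for fs j y
  proof -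
    have "\<bar>dlist fs (\<lambda>y. F y $ j) y\<bar> \<le> C j * R j^(length fs) * fact (length fs)"
      using CR(3)[OF that] .
    also have "\<dots> \<le> Cm * Rm^(length fs) * fact (length fs)"
      using CR(1,2)[of j] Cm[of j] Rm[of j] by (intro mult_right_mono mult_mono power_mono) auto
    finally show ?thesis by (simp add: cauchy_bound_def)
  qed
  moreover have "Cm > 0" "Rm > 0"
    unfolding Cm_def Rm_def using CR(1,2) by (smt (verit) sum_nonneg)+
  ultimately show ?thesis using that by blast
qed

subsection \<open>Pullback of ultradifferentiable functions\<close>

lemma rel_compact_open_neighbourhood:
  fixes K :: "(real^'m::finite) set"
  assumes K: "compact K" "K \<subseteq> \<Omega>" and \<Omega>: "open \<Omega>"
  obtains W where "rel_compact_open W \<Omega>" "K \<subseteq> W"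
proof -
  obtain e where e: "e > 0" "\<And>x. x \<in> K \<Longrightarrow> \<exists>G\<in>{\<Omega>}. ball x e \<subseteq> G"
    by (rule Heine_Borel_lemma[OF K(1), of "{\<Omega>}"]) (use K \<Omega> in auto)
  define W where "W = (\<Union>x\<in>K. ball x (e/2))"
  have "open W" by (simp add: W_def open_UN)
  moreover have "K \<subseteq> W" using e by (force simp: W_def)
  moreover have "bounded W"
  proof -
    obtain B where B: "\<And>x. x \<in> K \<Longrightarrow> norm x \<le> B"
      using compact_imp_bounded[OF K(1)] by (meson bounded_iff)
    have "W \<subseteq> cball 0 (B + e)"
    proof
      fix w assume "w \<in> W"
      then obtain x where x: "x \<in> K" "dist x w < e/2" by (auto simp: W_def)
      have "norm w \<le> norm x + dist x w" by (metis dist_norm norm_triangle_sub norm_minus_commute add.commute)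
      then show "w \<in> cball 0 (B + e)" using B[OF x(1)] x(2) e by simp
    qed
    then show ?thesis using bounded_subset by blast
  qed
  moreover have "closure W \<subseteq> \<Omega>"
  proof
    fix y assume "y \<in> closure W"
    then obtain w where w: "w \<in> W" "dist w y < e/2"
      using e closure_approachable[of y W] by (meson half_gt_zero)
    then obtain x where x: "x \<in> K" "dist x w < e/2" by (auto simp: W_def)
    then have "dist x y < e" using w dist_triangle[of x y w] by linarith
    then show "y \<in> \<Omega>" using e(2)[OF x(1)] by auto
  qed
  ultimately show ?thesis using that unfolding rel_compact_open_def by auto
qed

definition deriv_bounded_on ::
    "(real^'n::finite) set \<Rightarrow> (real^'n \<Rightarrow> real) \<Rightarrow> real \<Rightarrow> real \<Rightarrow> (nat \<Rightarrow> real) \<Rightarrow> bool" where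
  "deriv_bounded_on V f C \<rho> M \<longleftrightarrow> (\<forall>x\<in>V. \<forall>\<alpha>. \<bar>pmulti \<alpha> f x\<bar> \<le> C * (\<rho> ^ mlen \<alpha> * M (mlen \<alpha>)))"

lemma deriv_bounded_on_max:
  assumes "deriv_bounded_on V f C \<rho> M" "\<rho> > 0" "\<And>k. M k > 0"
  shows "deriv_bounded_on V f (max C 0) \<rho> M"
proof -
  have "C * (\<rho> ^ l * M l) \<le> max C 0 * (\<rho> ^ l * M l)" for l
    using assms(2) assms(3)[of l] by (intro mult_right_mono) auto
  then show ?thesis using assms(1) unfolding deriv_bounded_on_def by (meson order_trans)
qed

lemma roumieu_iff:
  "f \<in> roumieu \<MM> \<Omega> \<longleftrightarrow> smooth_on \<Omega> f \<and>
    (\<forall>V. rel_compact_open V \<Omega> \<longrightarrow> (\<exists>M\<in>\<MM>. \<exists>\<rho>>0. \<exists>C. deriv_bounded_on V f C \<rho> M))"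
  by (simp add: roumieu_def deriv_bounded_on_def)

lemma beurling_iff:
  "f \<in> beurling \<MM> \<Omega> \<longleftrightarrow> smooth_on \<Omega> f \<and>
    (\<forall>V. rel_compact_open V \<Omega> \<longrightarrow> (\<forall>M\<in>\<MM>. \<forall>\<rho>>0. \<exists>C. deriv_bounded_on V f C \<rho> M))"
  by (simp add: beurling_def deriv_bounded_on_def)

context
  fixes F :: "real^'n::finite \<Rightarrow> real^'m::finite" and \<Omega>1 :: "(real^'n) set" and \<Omega>2 :: "(real^'m) set"
  assumes \<Omega>: "open \<Omega>1" "open \<Omega>2" and F: "F ` \<Omega>1 \<subseteq> \<Omega>2" and analytic: "real_analytic_map \<Omega>1 F"
begin

lemma smooth_on_pullback: "smooth_on \<Omega>2 u \<Longrightarrow> smooth_on \<Omega>1 (u \<circ> F)"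
  using smooth_on_comp[OF _ \<Omega>(2) \<Omega>(1) real_analytic_map_smooth[OF analytic] F] .

lemma pullback_dlist_bound:
  assumes V: "rel_compact_open V \<Omega>1" and u: "smooth_on \<Omega>2 u"
  obtains W and C R :: real where "rel_compact_open W \<Omega>2" "C > 0" "R > 0"
    "\<And>c \<rho> M x ds. deriv_bounded_on W u c \<rho> M \<Longrightarrow> x \<in> V \<Longrightarrow>
      \<bar>dlist ds (u \<circ> F) x\<bar> \<le>
        (\<Sum>j\<le>length ds. (c * \<rho>^j * M j) * ((CARD('m) * C)^j * R^(length ds) * lah (length ds) j))"
proof -
  have V': "compact (closure V)" "closure V \<subseteq> \<Omega>1" "V \<subseteq> \<Omega>1"
    using V closure_subset by (auto simp: rel_compact_open_def)
  have "compact (F ` closure V)"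
    using smooth_on_components_continuous[OF real_analytic_map_smooth[OF analytic]]
    by (intro compact_continuous_image[OF _ V'(1)] continuous_on_subset[OF _ V'(2)])
  moreover have "F ` closure V \<subseteq> \<Omega>2" using F V' by auto
  ultimately obtain W where W: "rel_compact_open W \<Omega>2" "F ` closure V \<subseteq> W"
    using rel_compact_open_neighbourhood[OF _ _ \<Omega>(2)] by metis
  obtain C R where CR: "C > 0" "R > 0"
    and FC: "\<And>fs j y. y \<in> closure V \<Longrightarrow> \<bar>dlist fs (\<lambda>y. F y $ j) y\<bar> \<le> cauchy_bound C R (length fs)"
    using real_analytic_map_cauchy_bound[OF analytic V'(1,2)] by metis
  have "\<bar>dlist ds (u \<circ> F) x\<bar> \<le>
      (\<Sum>j\<le>length ds. (c * \<rho>^j * M j) * ((CARD('m) * C)^j * R^(length ds) * lah (length ds) j))"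
    if bound: "deriv_bounded_on W u c \<rho> M" and x: "x \<in> V" for c \<rho> M x ds
  proof (rule dlist_comp_bound[where U="\<lambda>j. c * \<rho>^j * M j"])
    show "dlist ds (u \<circ> F) x = sum_list (map (\<lambda>t. term_val u F t x) (chain_terms ds))"
      using dlist_comp_eq_sum_chain_terms[OF u \<Omega>(2,1) real_analytic_map_smooth[OF analytic] F] x V'
      by blast
    have "x \<in> closure V" using x closure_subset by blast
    then have "F x \<in> W" "F x \<in> \<Omega>2" using W(2) F V'(2) by auto
    then show "\<bar>dlist es u (F x)\<bar> \<le> c * \<rho>^(length es) * M (length es)" for es
      using dlist_bound_from_pmulti[OF u \<Omega>(2), of "F x" "\<lambda>l. c * (\<rho>^l * M l)"] bound
      by (simp add: deriv_bounded_on_def mult.assoc)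
    show "\<bar>dlist fs (\<lambda>y. F y $ j) x\<bar> \<le> cauchy_bound C R (length fs)" for fs j
      using FC x closure_subset by blast
  qed
  with W(1) CR that show ?thesis by blast
qed

lemma pullback_deriv_bounded:
  assumes V: "rel_compact_open V \<Omega>1" and u: "smooth_on \<Omega>2 u"
  obtains W B where "rel_compact_open W \<Omega>2" "B > 0"
    "\<And>M c \<rho> \<rho>'. weight_sequence M \<Longrightarrow>
      filterlim (\<lambda>k. (M k / fact k) powr (1 / real k)) at_top sequentially \<Longrightarrow>
      \<rho> > 0 \<Longrightarrow> B * \<rho> \<le> \<rho>' \<Longrightarrow> deriv_bounded_on W u c \<rho> M \<Longrightarrow>
      \<exists>C'. deriv_bounded_on V (u \<circ> F) C' \<rho>' M"
proof -
  obtain W and C R :: real where W: "rel_compact_open W \<Omega>2" and CR: "C > 0" "R > 0"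
    and expand: "\<And>c \<rho> M x ds. deriv_bounded_on W u c \<rho> M \<Longrightarrow> x \<in> V \<Longrightarrow>
      \<bar>dlist ds (u \<circ> F) x\<bar> \<le>
        (\<Sum>j\<le>length ds. (c * \<rho>^j * M j) * ((CARD('m) * C)^j * R^(length ds) * lah (length ds) j))"
    by (rule pullback_dlist_bound[OF V u]) auto
  define A where "A = CARD('m) * C"
  have A: "A > 0" using CR by (simp add: A_def)
  have transfer: "\<exists>C'. deriv_bounded_on V (u \<circ> F) C' \<rho>' M"
    if ws: "weight_sequence M"
      and lim: "filterlim (\<lambda>k. (M k / fact k) powr (1 / real k)) at_top sequentially"
      and \<rho>: "\<rho> > 0" "12 * R * A * \<rho> \<le> \<rho>'" and bound: "deriv_bounded_on W u c \<rho> M" for M c \<rho> \<rho>'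
  proof -
    define \<sigma> where "\<sigma> = \<rho>' / (12 * R)"
    have "0 < 12 * R * A * \<rho>" using \<rho>(1) A CR by simp
    then have \<sigma>: "\<sigma> > 0" "\<rho> * A \<le> \<sigma>" "\<rho>' = 12 * R * \<sigma>"
      using \<rho>(2) CR by (auto simp: \<sigma>_def field_simps)
    obtain D where D: "D \<ge> 0" "\<And>l. fact l / M l \<le> D * \<sigma>^l"
      using fact_div_le_geometric[OF weight_sequence_pos[OF ws] lim \<sigma>(1)] by blast
    have bound': "deriv_bounded_on W u (max c 0) \<rho> M"
      using deriv_bounded_on_max[OF bound \<rho>(1) weight_sequence_pos[OF ws]] .
    have "\<bar>dlist ds (u \<circ> F) x\<bar> \<le> (max c 0 * D) * (\<rho>'^(length ds) * M (length ds))" if "x \<in> V" for x ds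
      using order_trans[OF expand[OF bound' that, folded A_def]
          lah_weight_sum_le[OF ws _ D(1) \<rho>(1) A CR(2) \<sigma>(1) \<sigma>(2) order_refl D(2)]]
      by (simp add: \<sigma>(3) mult_ac)
    then show ?thesis
      unfolding deriv_bounded_on_def by (intro exI ballI allI pmulti_bound_from_dlist) (simp add: o_def)
  qed
  have "12 * R * A > 0" using CR A by simp
  from that[OF W this transfer] show ?thesis .
qed

theorem roumieu_pullback:
  assumes "u \<in> roumieu \<MM> \<Omega>2" "\<forall>M\<in>\<MM>. weight_sequence M"
    "\<forall>M\<in>\<MM>. filterlim (\<lambda>k. (M k / fact k) powr (1 / real k)) at_top sequentially"
  shows "u \<circ> F \<in> roumieu \<MM> \<Omega>1"
  unfolding roumieu_iff
proof (intro conjI allI impI)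
  have u: "smooth_on \<Omega>2 u" using assms(1) by (simp add: roumieu_iff)
  then show "smooth_on \<Omega>1 (u \<circ> F)" by (rule smooth_on_pullback)
  fix V assume V: "rel_compact_open V \<Omega>1"
  obtain W B where W: "rel_compact_open W \<Omega>2" and B: "B > 0"
    and transfer: "\<And>M c \<rho> \<rho>'. weight_sequence M \<Longrightarrow>
      filterlim (\<lambda>k. (M k / fact k) powr (1 / real k)) at_top sequentially \<Longrightarrow>
      \<rho> > 0 \<Longrightarrow> B * \<rho> \<le> \<rho>' \<Longrightarrow> deriv_bounded_on W u c \<rho> M \<Longrightarrow>
      \<exists>C'. deriv_bounded_on V (u \<circ> F) C' \<rho>' M"
    by (rule pullback_deriv_bounded[OF V u]) auto
  obtain M \<rho> c where M: "M \<in> \<MM>" and \<rho>: "\<rho> > 0" and "deriv_bounded_on W u c \<rho> M"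
    using assms(1) W by (auto simp: roumieu_iff)
  with assms(2,3) transfer[of M \<rho> "B * \<rho>" c]
  obtain C' where "deriv_bounded_on V (u \<circ> F) C' (B * \<rho>) M" by auto
  moreover have "B * \<rho> > 0" using B \<rho> by simp
  ultimately show "\<exists>M\<in>\<MM>. \<exists>\<rho>>0. \<exists>C. deriv_bounded_on V (u \<circ> F) C \<rho> M" using M by blast
qed

theorem beurling_pullback:
  assumes "u \<in> beurling \<MM> \<Omega>2" "\<forall>M\<in>\<MM>. weight_sequence M"
    "\<forall>M\<in>\<MM>. filterlim (\<lambda>k. (M k / fact k) powr (1 / real k)) at_top sequentially"
  shows "u \<circ> F \<in> beurling \<MM> \<Omega>1"
  unfolding beurling_iff
proof (intro conjI allI impI ballI)
  have u: "smooth_on \<Omega>2 u" using assms(1) by (simp add: beurling_iff)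
  then show "smooth_on \<Omega>1 (u \<circ> F)" by (rule smooth_on_pullback)
  fix V M and \<rho>' :: real assume V: "rel_compact_open V \<Omega>1" and M: "M \<in> \<MM>" and \<rho>': "\<rho>' > 0"
  obtain W B where W: "rel_compact_open W \<Omega>2" and B: "B > 0"
    and transfer: "\<And>M c \<rho> \<rho>'. weight_sequence M \<Longrightarrow>
      filterlim (\<lambda>k. (M k / fact k) powr (1 / real k)) at_top sequentially \<Longrightarrow>
      \<rho> > 0 \<Longrightarrow> B * \<rho> \<le> \<rho>' \<Longrightarrow> deriv_bounded_on W u c \<rho> M \<Longrightarrow>
      \<exists>C'. deriv_bounded_on V (u \<circ> F) C' \<rho>' M"
    by (rule pullback_deriv_bounded[OF V u]) auto
  have \<rho>: "\<rho>' / B > 0" using \<rho>' B by simp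
  then obtain c where "deriv_bounded_on W u c (\<rho>' / B) M"
    using assms(1) W M unfolding beurling_iff by blast
  with assms(2,3) M B \<rho> transfer[of M "\<rho>' / B" \<rho>' c]
  show "\<exists>C. deriv_bounded_on V (u \<circ> F) C \<rho>' M" by auto
qed

end

theorem theorem2p8:
  fixes \<MM> :: "(nat \<Rightarrow> real) set"
    and F :: "real^'n::finite \<Rightarrow> real^'m::finite"
    and \<Omega>1 :: "(real^'n) set" and \<Omega>2 :: "(real^'m) set"
  assumes "weight_matrix \<MM>"
    and "\<forall>M\<in>\<MM>. filterlim (\<lambda>k. (M k / fact k) powr (1 / real k)) at_top sequentially"
    and "open \<Omega>1" and "open \<Omega>2"
    and "F ` \<Omega>1 \<subseteq> \<Omega>2"
    and "real_analytic_map \<Omega>1 F"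
  shows "(\<forall>u\<in>roumieu \<MM> \<Omega>2. u \<circ> F \<in> roumieu \<MM> \<Omega>1) \<and>
         (\<forall>u\<in>beurling \<MM> \<Omega>2. u \<circ> F \<in> beurling \<MM> \<Omega>1)"
proof -
  have "\<forall>M\<in>\<MM>. weight_sequence M" using assms(1) by (simp add: weight_matrix_def)
  then show ?thesis
    using roumieu_pullback[OF assms(3-6) _ _ assms(2)] beurling_pullback[OF assms(3-6) _ _ assms(2)]
    by blast
qed

end
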